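(* Let $A$ be a bounded linear operator on $L^2(\mathbb R,dx)$ which is diagonal with respect to an orthonormal basis $\{e_n\}_{n\in\mathbb N}$ of $L^2(\mathbb R,dx)$, with all eigenvalues in the open interval $(0,2)$, and let $\Phi_A$ be the corresponding Gauss kernel. Then: (i) If $0<\det(2A-A^2)<\infty$, then $\Phi_A\in L^2(\mu)$. (ii) Let $\alpha>0$. If $\sup_{0<\lambda<1}\frac{\partial^\alpha}{\partial\lambda^\alpha}\det\big(Id-(\lambda^2(Id-A))^2\big)^{-\frac12}<\infty$, then $\Phi_A\in\mathcal D^{\alpha,2}$.
   Context: $\mu$ is the white noise measure on the tempered distributions $\mathcal S'$ (Gaussian with $\int e^{i\langle\xi,x\rangle}d\mu=e^{-|\xi|^2/2}$, $\xi\in\mathcal S$). Hida distributions are determined by their $S$-transform $S\Phi(\xi)=\sum_n\langle\Phi^{(n)},\xi^{\otimes n}\rangle$, $\xi\in\mathcal S_{\mathbb C}$, where $\Phi=\sum_n\langle\Phi^{(n)},:\cdot^{\otimes n}:\rangle$ is the chaos expansion. For $A$ a bounded operator on $L^2(\mathbb R,dx)$ (extended complex-linearly), the Gauss kernel $\Phi_A$ is the Hida distribution with $S\Phi_A(\xi)=\exp\big(-\tfrac12\langle\xi,(Id-A)\xi\rangle\big)$, $\xi\in\mathcal S_{\mathbb C}$. For $A$ diagonal in $\{e_n\}$ with eigenvalues $a_n$, determinants are the infinite products of eigenvalues: $\det(2A-A^2)=\prod_n(2a_n-a_n^2)$ and $\det(Id-(\lambda^2(Id-A))^2)=\prod_n(1-\lambda^4(1-a_n)^2)$.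 For $\alpha\in\mathbb R$, $\mathcal D^{\alpha,2}$ consists of those $\Phi$ with square-integrable symmetric kernels $\Phi^{(n)}$ and $\sum_n(1+n^\alpha)\,n!\,|\Phi^{(n)}|^2<\infty$. For $\alpha>0$: if $\alpha\in\mathbb N$, $\frac{\partial^\alpha}{\partial\lambda^\alpha}$ is the ordinary derivative of order $\alpha$; otherwise, with $n\in\mathbb N$ such that $n<\alpha<n+1$, $\frac{\partial^\alpha}{\partial\lambda^\alpha}:=D^{\alpha-n}_{0+}\frac{\partial^n}{\partial\lambda^n}$, where $D^{\beta}_{0+}f(x)=\frac{1}{\Gamma(1-\beta)}\frac{d}{dx}\int_0^xf(t)(x-t)^{-\beta}dt$ is the left-sided Riemann–Liouville derivative of order $\beta\in(0,1)$. *)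

theory Defs
  imports "HOL-Analysis.Analysis" "HOL-Library.Multiset"
begin

text \<open>The operator A is diagonal in the orthonormal basis e_k of L^2(R),
  so it is described by its eigenvalue sequence a. A chaos kernel Phi^(n) is described by
  its coefficients F n ks with respect to the orthonormal system
  e_(ks!0) (x) ... (x) e_(ks!(n-1)), ks a list of length n.\<close>

text \<open>Pairing of the n-th kernel with xi^(x)n, for xi a finite combination of the e_k.\<close>
definition S_pair :: "(nat \<Rightarrow> nat list \<Rightarrow> complex) \<Rightarrow> nat \<Rightarrow> (nat \<Rightarrow> complex) \<Rightarrow> complex" where
  "S_pair F n \<xi> =
     (\<Sum>ks\<in>{ks. length ks = n \<and> set ks \<subseteq> {k. \<xi> k \<noteq> 0}}. F n ks * prod_list (map \<xi> ks))"

text \<open>F is the (symmetric) chaos expansion of the Gauss kernel Phi_A: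
  S Phi_A (xi) = exp(-1/2 <xi,(Id-A)xi>), bilinear pairing.\<close>
definition is_gauss_kernel :: "(nat \<Rightarrow> real) \<Rightarrow> (nat \<Rightarrow> nat list \<Rightarrow> complex) \<Rightarrow> bool" where
  "is_gauss_kernel a F \<longleftrightarrow>
     (\<forall>n ks ks'. mset ks = mset ks' \<longrightarrow> F n ks = F n ks') \<and>
     (\<forall>\<xi>. finite {k. \<xi> k \<noteq> 0} \<longrightarrow>
        (\<lambda>n. S_pair F n \<xi>) sums
          exp (- (1/2) * (\<Sum>k\<in>{k. \<xi> k \<noteq> 0}. complex_of_real (1 - a k) * (\<xi> k)^2)))"

definition kernel_norm2 :: "(nat \<Rightarrow> nat list \<Rightarrow> complex) \<Rightarrow> nat \<Rightarrow> real" where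
  "kernel_norm2 F n = (\<Sum>\<^sub>\<infinity>ks\<in>{ks. length ks = n}. (cmod (F n ks))^2)"

definition sq_integrable_kernels :: "(nat \<Rightarrow> nat list \<Rightarrow> complex) \<Rightarrow> bool" where
  "sq_integrable_kernels F \<longleftrightarrow>
     (\<forall>n. (\<lambda>ks. (cmod (F n ks))^2) summable_on {ks. length ks = n})"

text \<open>Membership in L^2(mu) (Wiener-Ito chaos isometry) and in D^{alpha,2}.\<close>
definition in_L2 :: "(nat \<Rightarrow> nat list \<Rightarrow> complex) \<Rightarrow> bool" where
  "in_L2 F \<longleftrightarrow> sq_integrable_kernels F \<and> summable (\<lambda>n. fact n * kernel_norm2 F n)"

definition in_D :: "real \<Rightarrow> (nat \<Rightarrow> nat list \<Rightarrow> complex) \<Rightarrow> bool" where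
  "in_D \<alpha> F \<longleftrightarrow> sq_integrable_kernels F \<and>
     summable (\<lambda>n. (1 + real n powr \<alpha>) * fact n * kernel_norm2 F n)"

definition det_2A_A2 :: "(nat \<Rightarrow> real) \<Rightarrow> real" where
  "det_2A_A2 a = lim (\<lambda>N. \<Prod>k<N. 2 * a k - (a k)^2)"

definition det_lam :: "(nat \<Rightarrow> real) \<Rightarrow> real \<Rightarrow> real" where
  "det_lam a l = lim (\<lambda>N. \<Prod>k<N. 1 - (l^2 * (1 - a k))^2)"

definition gfun :: "(nat \<Rightarrow> real) \<Rightarrow> real \<Rightarrow> real" where
  "gfun a l = det_lam a l powr (-(1/2))"

fun iter_deriv_on :: "nat \<Rightarrow> (real \<Rightarrow> real) \<Rightarrow> real set \<Rightarrow> (real \<Rightarrow> real) \<Rightarrow> bool" where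
  "iter_deriv_on 0 g S h \<longleftrightarrow> (\<forall>x\<in>S. h x = g x)"
| "iter_deriv_on (Suc n) g S h \<longleftrightarrow>
     (\<exists>g'. (\<forall>x\<in>S. (g has_real_derivative g' x) (at x)) \<and> iter_deriv_on n g' S h)"

definition has_RL_deriv :: "real \<Rightarrow> (real \<Rightarrow> real) \<Rightarrow> real \<Rightarrow> real \<Rightarrow> bool" where
  "has_RL_deriv \<beta> f x v \<longleftrightarrow>
     (\<exists>I. (\<forall>y\<in>{0<..<1}. (\<lambda>t. f t * (y - t) powr (-\<beta>)) absolutely_integrable_on {0..y} \<and>
                         I y = integral {0..y} (\<lambda>t. f t * (y - t) powr (-\<beta>))) \<and>
          (I has_real_derivative (Gamma (1 - \<beta>) * v)) (at x))"

definition has_alpha_deriv :: "real \<Rightarrow> (real \<Rightarrow> real) \<Rightarrow> real \<Rightarrow> real \<Rightarrow> bool" where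
  "has_alpha_deriv \<alpha> g x v \<longleftrightarrow>
     (if \<alpha> \<in> \<nat> then (\<exists>h. iter_deriv_on (nat \<lfloor>\<alpha>\<rfloor>) g {0<..<1} h \<and> h x = v)
      else (\<exists>h. iter_deriv_on (nat \<lfloor>\<alpha>\<rfloor>) g {0<..<1} h \<and>
                 has_RL_deriv (\<alpha> - of_int \<lfloor>\<alpha>\<rfloor>) h x v))"

end

theory Submission
  imports Defs
begin

text \<open>Testing the defining identity of \<open>\<Phi>\<^sub>A\<close> against \<open>t \<xi>\<close> and comparing coefficients of
  \<open>t ^ n\<close> shows that the \<open>n\<close>-th kernel paired with \<open>\<xi>\<^sup>\<otimes>\<^sup>n\<close> is the coefficient of \<open>t ^ n\<close> in
  \<open>exp (- t\<^sup>2 \<langle>\<xi>, (Id - A) \<xi>\<rangle> / 2)\<close>. Splitting off the last basis vector gives a recursion for the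
  kernel coefficients, under which the truncated norms
  \<open>b\<^sub>N(n) = n! \<parallel>\<Phi>\<^sup>(\<^sup>n\<^sup>) restricted to e\<^sub>0, \<dots>, e\<^sub>N\<^sub>-\<^sub>1\<parallel>\<^sup>2\<close> have the generating function
  \<open>\<Sum>\<^sub>n b\<^sub>N(n) s\<^sup>n = \<Prod>\<^sub>k\<^sub><\<^sub>N (1 - s\<^sup>2 (1 - a\<^sub>k)\<^sup>2)\<^sup>-\<^sup>1\<^sup>/\<^sup>2\<close>. Monotone convergence in \<open>N\<close>
  yields \<open>\<Sum>\<^sub>n n! \<parallel>\<Phi>\<^sup>(\<^sup>n\<^sup>)\<parallel>\<^sup>2 s\<^sup>n = det (Id - (s (Id - A))\<^sup>2)\<^sup>-\<^sup>1\<^sup>/\<^sup>2\<close>, and \<open>s = 1\<close> gives (i).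

  For (ii), \<open>g(\<lambda>) = \<Sum>\<^sub>n n! \<parallel>\<Phi>\<^sup>(\<^sup>n\<^sup>)\<parallel>\<^sup>2 \<lambda>\<^sup>2\<^sup>n\<close> is a power series with nonnegative coefficients, so a
  bound on its derivative of order \<open>\<alpha>\<close> on \<open>(0, 1)\<close> bounds \<open>\<Sum>\<^sub>n n\<^sup>\<alpha> n! \<parallel>\<Phi>\<^sup>(\<^sup>n\<^sup>)\<parallel>\<^sup>2\<close>:
  the integer part of \<open>\<alpha>\<close> is differentiated termwise, the fractional part is handled termwise
  through the Beta integral.\<close>

section \<open>Words over a finite alphabet\<close>

definition lists_len :: "'a set \<Rightarrow> nat \<Rightarrow> 'a list set" where
  "lists_len K n = {xs. set xs \<subseteq> K \<and> length xs = n}"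

lemma finite_lists_len: "finite K \<Longrightarrow> finite (lists_len K n)"
  unfolding lists_len_def using finite_lists_length_eq by blast

lemma lists_len_0 [simp]: "lists_len K 0 = {[]}"
  unfolding lists_len_def by auto

lemma lists_len_mono: "K \<subseteq> K' \<Longrightarrow> lists_len K n \<subseteq> lists_len K' n"
  unfolding lists_len_def by auto

lemma sum_lists_len_Suc:
  assumes "finite K"
  shows "(\<Sum>ks\<in>lists_len K (Suc m). g ks) = (\<Sum>x\<in>K. \<Sum>ks\<in>lists_len K m. g (x # ks))"
proof -
  have eq: "lists_len K (Suc m) = (\<lambda>(xs, n). n # xs) ` (lists_len K m \<times> K)"
    unfolding lists_len_def by (rule lists_length_Suc_eq)
  have inj: "inj_on (\<lambda>(xs, n). n # xs) (lists_len K m \<times> K)"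
    by (auto simp: inj_on_def)
  have "(\<Sum>ks\<in>lists_len K (Suc m). g ks) = (\<Sum>p\<in>lists_len K m \<times> K. g (snd p # fst p))"
    unfolding eq by (subst sum.reindex[OF inj]) (auto intro!: sum.cong)
  also have "\<dots> = (\<Sum>ks\<in>lists_len K m. \<Sum>x\<in>K. g (x # ks))"
    by (simp add: sum.cartesian_product split_beta)
  also have "\<dots> = (\<Sum>x\<in>K. \<Sum>ks\<in>lists_len K m. g (x # ks))"
    by (rule sum.swap)
  finally show ?thesis .
qed

lemma sum_choose_Suc:
  fixes A :: "nat \<Rightarrow> 'a::comm_ring_1"
  shows "(\<Sum>r\<le>n. of_nat (n choose r) * (A (Suc r) + A r)) =
         (\<Sum>r\<le>Suc n. of_nat (Suc n choose r) * A r)"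
proof -
  have "(\<Sum>r\<le>n. of_nat (n choose r) * A r) = (\<Sum>r\<le>Suc n. of_nat (n choose r) * A r)"
    by (simp add: binomial_eq_0)
  also have "\<dots> = A 0 + (\<Sum>r\<le>n. of_nat (n choose Suc r) * A (Suc r))"
    by (subst sum.atMost_Suc_shift) simp
  finally have lower: "(\<Sum>r\<le>n. of_nat (n choose r) * A r) =
      A 0 + (\<Sum>r\<le>n. of_nat (n choose Suc r) * A (Suc r))" .
  have "(\<Sum>r\<le>Suc n. of_nat (Suc n choose r) * A r) =
      A 0 + (\<Sum>r\<le>n. of_nat (Suc n choose Suc r) * A (Suc r))"
    by (subst sum.atMost_Suc_shift) simp
  also have "\<dots> = A 0 + ((\<Sum>r\<le>n. of_nat (n choose r) * A (Suc r)) +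
      (\<Sum>r\<le>n. of_nat (n choose Suc r) * A (Suc r)))"
    by (simp only: binomial_Suc_Suc of_nat_add distrib_right sum.distrib)
  finally show ?thesis
    unfolding distrib_left sum.distrib lower by (simp only: add_ac)
qed

text \<open>Words are grouped by the number \<open>r\<close> of occurrences of \<open>j\<close>; by symmetry these can be moved
  to the front, and the binomial coefficient counts their positions.\<close>

lemma sum_lists_len_insert:
  fixes w :: "'a list \<Rightarrow> 'b::comm_ring_1"
  assumes sym: "\<And>xs ys. mset xs = mset ys \<Longrightarrow> w xs = w ys"
    and j: "j \<notin> K" and fin: "finite K"
  shows "(\<Sum>ks\<in>lists_len (insert j K) n. w ks) =
         (\<Sum>r\<le>n. of_nat (n choose r) * (\<Sum>ks\<in>lists_len K (n - r). w (replicate r j @ ks)))"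
  using sym
proof (induction n arbitrary: w)
  case 0
  show ?case by simp
next
  case (Suc n)
  define A where "A r = (\<Sum>ks\<in>lists_len K (Suc n - r). w (replicate r j @ ks))" for r
  have "(\<Sum>ks\<in>lists_len (insert j K) (Suc n). w ks) =
        (\<Sum>ks\<in>lists_len (insert j K) n. w (j # ks)) +
        (\<Sum>x\<in>K. \<Sum>ks\<in>lists_len (insert j K) n. w (x # ks))"
    using j fin by (simp add: sum_lists_len_Suc)
  also have "(\<Sum>ks\<in>lists_len (insert j K) n. w (j # ks)) =
      (\<Sum>r\<le>n. of_nat (n choose r) * (\<Sum>ks\<in>lists_len K (n - r). w (j # replicate r j @ ks)))"
    by (rule Suc.IH) (rule Suc.prems, simp)
  also have "\<dots> = (\<Sum>r\<le>n. of_nat (n choose r) * A (Suc r))"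
    unfolding A_def by (intro sum.cong refl) (simp add: replicate_app_Cons_same[symmetric])
  also have "(\<Sum>x\<in>K. \<Sum>ks\<in>lists_len (insert j K) n. w (x # ks)) =
     (\<Sum>x\<in>K. \<Sum>r\<le>n. of_nat (n choose r) *
        (\<Sum>ks\<in>lists_len K (n - r). w (x # replicate r j @ ks)))"
    by (intro sum.cong refl Suc.IH) (rule Suc.prems, simp)
  also have "\<dots> = (\<Sum>r\<le>n. of_nat (n choose r) *
      (\<Sum>x\<in>K. \<Sum>ks\<in>lists_len K (n - r). w (x # replicate r j @ ks)))"
    by (subst sum.swap) (simp add: sum_distrib_left)
  also have "\<dots> = (\<Sum>r\<le>n. of_nat (n choose r) *
      (\<Sum>x\<in>K. \<Sum>ks\<in>lists_len K (n - r). w (replicate r j @ x # ks)))"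
    by (intro sum.cong refl arg_cong2[where f="(*)"]) (rule Suc.prems, simp)
  also have "\<dots> = (\<Sum>r\<le>n. of_nat (n choose r) * A r)"
  proof (intro sum.cong refl arg_cong2[where f="(*)"])
    fix r assume "r \<in> {..n}"
    then have "Suc n - r = Suc (n - r)" by auto
    then show "(\<Sum>x\<in>K. \<Sum>ks\<in>lists_len K (n - r). w (replicate r j @ x # ks)) = A r"
      unfolding A_def by (simp add: sum_lists_len_Suc[OF fin])
  qed
  finally have "(\<Sum>ks\<in>lists_len (insert j K) (Suc n). w ks) =
      (\<Sum>r\<le>n. of_nat (n choose r) * (A (Suc r) + A r))"
    by (simp only: distrib_left sum.distrib)
  also have "\<dots> = (\<Sum>r\<le>Suc n. of_nat (Suc n choose r) * A r)"
    by (rule sum_choose_Suc)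
  finally show ?case
    unfolding A_def .
qed

lemma prod_list_map_mset_eq:
  "mset xs = mset ys \<Longrightarrow> prod_list (map f xs) = (prod_list (map f ys) :: 'a::comm_monoid_mult)"
  by (metis mset_map prod_mset_prod_list)

lemma sum_lists_len_insert_fun_upd:
  fixes G :: "'a list \<Rightarrow> 'b::comm_ring_1"
  assumes sym: "\<And>xs ys. mset xs = mset ys \<Longrightarrow> G xs = G ys"
    and j: "j \<notin> K" and fin: "finite K"
  shows "(\<Sum>ks\<in>lists_len (insert j K) n. G ks * prod_list (map (\<xi>(j := x)) ks)) =
     (\<Sum>i\<le>n. (of_nat (n choose i) *
        (\<Sum>ys\<in>lists_len K (n - i). G (replicate i j @ ys) * prod_list (map \<xi> ys))) * x ^ i)"
proof -
  have upd: "prod_list (map (\<xi>(j := x)) (replicate i j @ ys)) = x ^ i * prod_list (map \<xi> ys)"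
    if "ys \<in> lists_len K m" for ys i m
  proof -
    have "map (\<xi>(j := x)) ys = map \<xi> ys"
      using that j unfolding lists_len_def by (auto intro!: map_cong)
    moreover have "(\<xi>(j := x)) j = x" by simp
    ultimately show ?thesis
      by (simp only: map_append map_replicate prod_list.append prod_list_replicate)
  qed
  have "(\<Sum>ks\<in>lists_len (insert j K) n. G ks * prod_list (map (\<xi>(j := x)) ks)) =
     (\<Sum>i\<le>n. of_nat (n choose i) * (\<Sum>ys\<in>lists_len K (n - i).
        G (replicate i j @ ys) * prod_list (map (\<xi>(j := x)) (replicate i j @ ys))))"
    by (rule sum_lists_len_insert[OF _ j fin])
      (auto intro: sym prod_list_map_mset_eq arg_cong2[where f="(*)"])
  also have "\<dots> = (\<Sum>i\<le>n. (of_nat (n choose i) *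
        (\<Sum>ys\<in>lists_len K (n - i). G (replicate i j @ ys) * prod_list (map \<xi> ys))) * x ^ i)"
  proof (intro sum.cong refl)
    fix i
    have "(\<Sum>ys\<in>lists_len K (n - i).
          G (replicate i j @ ys) * prod_list (map (\<xi>(j := x)) (replicate i j @ ys))) =
        x ^ i * (\<Sum>ys\<in>lists_len K (n - i). G (replicate i j @ ys) * prod_list (map \<xi> ys))"
      unfolding sum_distrib_left by (rule sum.cong[OF refl]) (simp only: upd mult_ac)
    then show "of_nat (n choose i) * (\<Sum>ys\<in>lists_len K (n - i).
          G (replicate i j @ ys) * prod_list (map (\<xi>(j := x)) (replicate i j @ ys))) =
        (of_nat (n choose i) *
          (\<Sum>ys\<in>lists_len K (n - i). G (replicate i j @ ys) * prod_list (map \<xi> ys))) * x ^ i"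
      by (simp only: mult_ac)
  qed
  finally show ?thesis .
qed

text \<open>By induction on the number of variables: the form is a polynomial in \<open>\<xi> N\<close> whose
  coefficients are forms in the variables below \<open>N\<close>.\<close>

lemma symmetric_form_eq_0_imp_coeff_eq_0:
  fixes D :: "nat list \<Rightarrow> complex"
  assumes sym: "\<And>xs ys. mset xs = mset ys \<Longrightarrow> D xs = D ys"
    and form: "\<And>\<xi>. (\<forall>k\<ge>N. \<xi> k = 0) \<Longrightarrow> (\<Sum>ks\<in>lists_len {..<N} n. D ks * prod_list (map \<xi> ks)) = 0"
    and ks: "ks \<in> lists_len {..<N} n"
  shows "D ks = 0"
  using sym form ks
proof (induction N arbitrary: n D ks)
  case 0
  have "ks = []" "n = 0"
    using "0.prems"(3) unfolding lists_len_def by auto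
  then show ?case using "0.prems"(2)[of "\<lambda>_. 0"] by simp
next
  case (Suc N)
  define r where "r = count (mset ks) N"
  define ks' where "ks' = filter (\<lambda>y. y \<noteq> N) ks"
  have ks_mset: "mset ks = mset (replicate r N @ ks')"
    unfolding r_def ks'_def by (induction ks) auto
  have rn: "r \<le> n" and ks': "ks' \<in> lists_len {..<N} (n - r)"
    using Suc.prems(3) arg_cong[OF ks_mset, of size] unfolding lists_len_def ks'_def
    by (auto simp: less_Suc_eq simp flip: mset_filter)
  define D' where "D' ys = D (replicate r N @ ys)" for ys
  have "D' ks' = 0"
  proof (rule Suc.IH[OF _ _ ks'])
    show "\<And>xs ys. mset xs = mset ys \<Longrightarrow> D' xs = D' ys"
      unfolding D'_def by (rule Suc.prems(1)) simp
    fix \<xi> :: "nat \<Rightarrow> complex" assume \<xi>: "\<forall>k\<ge>N. \<xi> k = 0"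
    define c where "c i = of_nat (n choose i) *
      (\<Sum>ys\<in>lists_len {..<N} (n - i). D (replicate i N @ ys) * prod_list (map \<xi> ys))" for i
    have "(\<Sum>i\<le>n. c i * x ^ i) = 0" for x
    proof -
      have "(\<Sum>i\<le>n. c i * x ^ i) =
          (\<Sum>ks\<in>lists_len (insert N {..<N}) n. D ks * prod_list (map (\<xi>(N := x)) ks))"
        unfolding c_def by (rule sum_lists_len_insert_fun_upd[symmetric]) (auto intro: Suc.prems(1))
      also have "\<dots> = 0"
      proof -
        have "\<forall>k\<ge>Suc N. (\<xi>(N := x)) k = 0" using \<xi> by simp
        from Suc.prems(2)[OF this] show ?thesis unfolding lessThan_Suc .
      qed
      finally show ?thesis .
    qed
    then have "c r = 0" using polyfun_eq_0[of c n] rn by blast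
    then show "(\<Sum>ys\<in>lists_len {..<N} (n - r). D' ys * prod_list (map \<xi> ys)) = 0"
      unfolding c_def D'_def using rn by simp
  qed
  then show ?case
    unfolding D'_def using Suc.prems(1)[OF ks_mset] by simp
qed

lemma powser_sums_zero_coeff_0:
  fixes c :: "nat \<Rightarrow> complex"
  assumes "\<And>t. t \<noteq> 0 \<Longrightarrow> (\<lambda>n. c n * t ^ n) sums 0"
  shows "c 0 = 0"
proof -
  define f where "f t = (\<Sum>n. c n * t ^ n)" for t
  have "summable (\<lambda>n. c n * 1 ^ n)"
    using assms[of 1] sums_summable by force
  then have "isCont f 0"
    unfolding f_def by (rule isCont_powser) simp
  moreover have "\<forall>\<^sub>F t in at 0. f t = 0"
    unfolding eventually_at_filter
  proof (rule always_eventually, intro allI impI)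
    show "f t = 0" if "t \<noteq> 0" for t
      unfolding f_def using sums_unique[OF assms[OF that]] by simp
  qed
  ultimately have "f 0 = 0"
    by (metis at_neq_bot isCont_def tendsto_eventually tendsto_unique)
  then show ?thesis
    unfolding f_def by simp
qed

lemma powser_sums_zero_coeff_eq_0:
  fixes c :: "nat \<Rightarrow> complex"
  assumes "\<And>t. t \<noteq> 0 \<Longrightarrow> (\<lambda>n. c n * t ^ n) sums 0"
  shows "c n = 0"
  using assms
proof (induction n arbitrary: c)
  case 0
  then show ?case by (rule powser_sums_zero_coeff_0)
next
  case (Suc n)
  have c0: "c 0 = 0" by (rule powser_sums_zero_coeff_0) (rule Suc.prems)
  show ?case
  proof (rule Suc.IH[of "\<lambda>n. c (Suc n)", simplified])
    fix t :: complex assume t: "t \<noteq> 0"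
    have "(\<lambda>n. c (Suc n) * t ^ Suc n) sums 0"
      using Suc.prems[OF t] c0 by (subst sums_Suc_iff) simp
    then have "(\<lambda>n. (1 / t) * (c (Suc n) * t ^ Suc n)) sums ((1 / t) * 0)"
      by (rule sums_mult)
    then show "(\<lambda>n. c (Suc n) * t ^ n) sums 0"
      using t by (simp add: field_simps)
  qed
qed

lemma sums_even_terms:
  fixes f :: "nat \<Rightarrow> 'a::real_normed_vector"
  assumes "(\<lambda>m. f (2 * m)) sums s" and "\<And>n. odd n \<Longrightarrow> f n = 0"
  shows "f sums s"
proof -
  have "strict_mono (\<lambda>m::nat. 2 * m)" by (rule strict_monoI) simp
  moreover have "f n = 0" if "n \<notin> range (\<lambda>m. 2 * m)" for n
    using that assms(2) by (auto elim!: evenE)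
  ultimately show ?thesis
    using assms(1) sums_mono_reindex[of "\<lambda>m. 2 * m" f] by blast
qed

lemma sum_atMost_double:
  fixes g :: "nat \<Rightarrow> 'a::comm_monoid_add"
  assumes "\<And>r. odd r \<Longrightarrow> g r = 0"
  shows "(\<Sum>r\<le>2 * m. g r) = (\<Sum>i\<le>m. g (2 * i))"
proof (induction m)
  case 0
  then show ?case by simp
next
  case (Suc m)
  have "(\<Sum>r\<le>2 * Suc m. g r) = (\<Sum>r\<le>2 * m. g r) + g (Suc (2 * m)) + g (2 * Suc m)"
    by (simp add: add.assoc)
  then show ?case using Suc.IH assms by simp
qed

section \<open>Chaos coefficients of a Gauss kernel\<close>

definition gauss_coeff :: "nat \<Rightarrow> complex \<Rightarrow> complex" where
  "gauss_coeff n Q = (if even n then (- Q / 2) ^ (n div 2) / fact (n div 2) else 0)"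

lemma gauss_coeff_odd [simp]: "odd n \<Longrightarrow> gauss_coeff n Q = 0"
  by (simp add: gauss_coeff_def)

lemma gauss_coeff_sums: "(\<lambda>n. gauss_coeff n Q * t ^ n) sums exp (- (1/2) * (t\<^sup>2 * Q))"
proof (rule sums_even_terms)
  have "gauss_coeff (2 * m) Q * t ^ (2 * m) = (- (1/2) * (t\<^sup>2 * Q)) ^ m /\<^sub>R fact m" for m
  proof -
    have sq: "t ^ (2 * m) = (t\<^sup>2) ^ m" by (simp add: power_mult)
    have arg: "- (1/2) * (t\<^sup>2 * Q) = t\<^sup>2 * (- Q / 2)" by simp
    show ?thesis
      unfolding sq arg power_mult_distrib by (simp add: gauss_coeff_def scaleR_conv_of_real field_simps)
  qed
  then show "(\<lambda>m. gauss_coeff (2 * m) Q * t ^ (2 * m)) sums exp (- (1/2) * (t\<^sup>2 * Q))"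
    using exp_converges[of "- (1/2) * (t\<^sup>2 * Q)"] by simp
qed simp

lemma gauss_coeff_add:
  "gauss_coeff n (Q + q * x\<^sup>2) = (\<Sum>r\<le>n. (gauss_coeff r q * gauss_coeff (n - r) Q) * x ^ r)"
proof (cases "even n")
  case False
  have "(gauss_coeff r q * gauss_coeff (n - r) Q) * x ^ r = 0" if "r \<le> n" for r
    using False that by (cases "even r") auto
  then show ?thesis using False by (simp add: sum.neutral)
next
  case True
  then obtain m where n: "n = 2 * m" by (elim evenE)
  have "gauss_coeff n (Q + q * x\<^sup>2) = ((- q / 2) * x\<^sup>2 + (- Q / 2)) ^ m / fact m"
    unfolding gauss_coeff_def n by (simp add: field_simps)
  also have "\<dots> = (\<Sum>i\<le>m. of_nat (m choose i) * ((- q / 2) * x\<^sup>2) ^ i * (- Q / 2) ^ (m - i)) / fact m"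
    by (subst binomial_ring) (rule refl)
  also have "\<dots> = (\<Sum>i\<le>m. (gauss_coeff (2 * i) q * gauss_coeff (n - 2 * i) Q) * x ^ (2 * i))"
    unfolding sum_divide_distrib
  proof (intro sum.cong refl)
    fix i assume i: "i \<in> {..m}"
    have "n - 2 * i = 2 * (m - i)" using n by simp
    moreover have "of_nat (m choose i) = (fact m / (fact i * fact (m - i)) :: complex)"
      using i by (simp add: binomial_fact)
    moreover have "((- q / 2) * x\<^sup>2) ^ i = (- q / 2) ^ i * x ^ (2 * i)"
      unfolding power_mult by (rule power_mult_distrib)
    ultimately show "of_nat (m choose i) * ((- q / 2) * x\<^sup>2) ^ i * (- Q / 2) ^ (m - i) / fact m =
        (gauss_coeff (2 * i) q * gauss_coeff (n - 2 * i) Q) * x ^ (2 * i)"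
      by (simp add: gauss_coeff_def field_simps)
  qed
  also have "\<dots> = (\<Sum>r\<le>n. (gauss_coeff r q * gauss_coeff (n - r) Q) * x ^ r)"
    unfolding n by (rule sum_atMost_double[symmetric]) simp
  finally show ?thesis .
qed

lemma gauss_kernel_sym:
  "is_gauss_kernel a F \<Longrightarrow> mset xs = mset ys \<Longrightarrow> F n xs = F n ys"
  unfolding is_gauss_kernel_def by blast

lemma prod_list_map_scale:
  fixes t :: "'a::comm_monoid_mult"
  shows "prod_list (map (\<lambda>k. t * \<xi> k) ks) = t ^ length ks * prod_list (map \<xi> ks)"
  by (induct ks) (auto simp: mult_ac)

text \<open>Replacing \<open>\<xi>\<close> by \<open>t \<xi>\<close> in the defining identity of the Gauss kernel and comparing
  coefficients of \<open>t ^ n\<close>.\<close>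

lemma S_pair_gauss_kernel:
  assumes gauss: "is_gauss_kernel a F" and fin: "finite {k. \<xi> k \<noteq> 0}"
  shows "S_pair F n \<xi> = gauss_coeff n (\<Sum>k\<in>{k. \<xi> k \<noteq> 0}. complex_of_real (1 - a k) * (\<xi> k)\<^sup>2)"
proof -
  define S where "S = {k. \<xi> k \<noteq> 0}"
  define Q where "Q = (\<Sum>k\<in>S. complex_of_real (1 - a k) * (\<xi> k)\<^sup>2)"
  have "S_pair F n \<xi> - gauss_coeff n Q = 0" for n
  proof (rule powser_sums_zero_coeff_eq_0)
    fix t :: complex assume t: "t \<noteq> 0"
    define \<eta> where "\<eta> k = t * \<xi> k" for k
    have S\<eta>: "{k. \<eta> k \<noteq> 0} = S"
      unfolding \<eta>_def S_def using t by auto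
    have "finite {k. \<eta> k \<noteq> 0}"
      using fin S\<eta> unfolding S_def by simp
    with gauss have "(\<lambda>n. S_pair F n \<eta>) sums
        exp (- (1/2) * (\<Sum>k\<in>{k. \<eta> k \<noteq> 0}. complex_of_real (1 - a k) * (\<eta> k)\<^sup>2))"
      unfolding is_gauss_kernel_def by blast
    then have "(\<lambda>n. S_pair F n \<eta>) sums exp (- (1/2) * (\<Sum>k\<in>S. complex_of_real (1 - a k) * (\<eta> k)\<^sup>2))"
      unfolding S\<eta> .
    moreover have "(\<Sum>k\<in>S. complex_of_real (1 - a k) * (\<eta> k)\<^sup>2) = t\<^sup>2 * Q"
      unfolding Q_def \<eta>_def by (simp add: sum_distrib_left power_mult_distrib mult_ac)
    moreover have "S_pair F n \<eta> = S_pair F n \<xi> * t ^ n" for n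
    proof -
      have "S_pair F n \<eta> =
          (\<Sum>ks\<in>{ks. length ks = n \<and> set ks \<subseteq> S}. t ^ n * (F n ks * prod_list (map \<xi> ks)))"
        unfolding S_pair_def S\<eta> by (rule sum.cong) (auto simp: \<eta>_def[abs_def] prod_list_map_scale)
      then show ?thesis
        unfolding S_pair_def S_def by (simp add: sum_distrib_left mult_ac)
    qed
    ultimately have "(\<lambda>n. S_pair F n \<xi> * t ^ n) sums exp (- (1/2) * (t\<^sup>2 * Q))"
      by simp
    from sums_diff[OF this gauss_coeff_sums[of Q t]]
    show "(\<lambda>n. (S_pair F n \<xi> - gauss_coeff n Q) * t ^ n) sums 0"
      by (simp add: algebra_simps)
  qed
  then show ?thesis
    unfolding Q_def S_def by simp
qed

lemma gauss_kernel_form: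
  assumes gauss: "is_gauss_kernel a F" and \<xi>: "\<forall>k\<ge>N. \<xi> k = 0"
  shows "(\<Sum>ks\<in>lists_len {..<N} n. F n ks * prod_list (map \<xi> ks)) =
    gauss_coeff n (\<Sum>k<N. complex_of_real (1 - a k) * (\<xi> k)\<^sup>2)"
proof -
  define S where "S = {k. \<xi> k \<noteq> 0}"
  have SN: "S \<subseteq> {..<N}"
    unfolding S_def using \<xi> by (auto simp: not_less[symmetric])
  then have finS: "finite S"
    using finite_subset by blast
  have "(\<Sum>ks\<in>lists_len {..<N} n. F n ks * prod_list (map \<xi> ks)) =
      (\<Sum>ks\<in>lists_len S n. F n ks * prod_list (map \<xi> ks))"
  proof (rule sum.mono_neutral_right)
    show "finite (lists_len {..<N} n)" by (rule finite_lists_len) simp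
    show "lists_len S n \<subseteq> lists_len {..<N} n" by (rule lists_len_mono[OF SN])
    show "\<forall>ks\<in>lists_len {..<N} n - lists_len S n. F n ks * prod_list (map \<xi> ks) = 0"
      by (auto simp: lists_len_def S_def prod_list_zero_iff)
  qed
  also have "\<dots> = S_pair F n \<xi>"
    unfolding S_pair_def lists_len_def S_def by (simp add: conj_commute)
  also have "\<dots> = gauss_coeff n (\<Sum>k\<in>S. complex_of_real (1 - a k) * (\<xi> k)\<^sup>2)"
    unfolding S_def by (rule S_pair_gauss_kernel[OF gauss finS[unfolded S_def]])
  also have "(\<Sum>k\<in>S. complex_of_real (1 - a k) * (\<xi> k)\<^sup>2) = (\<Sum>k<N. complex_of_real (1 - a k) * (\<xi> k)\<^sup>2)"
    by (rule sum.mono_neutral_left) (use SN in \<open>auto simp: S_def\<close>)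
  finally show ?thesis .
qed

lemma gauss_kernel_Nil: "is_gauss_kernel a F \<Longrightarrow> F 0 [] = 1"
  using gauss_kernel_form[of a F 0 "\<lambda>_. 0" 0] by (simp add: gauss_coeff_def)

text \<open>Both sides are the coefficient of \<open>(\<xi> N) ^ r\<close> in the form in the variables \<open>0, \<dots>, N\<close>,
  expanded by \<open>sum_lists_len_insert_fun_upd\<close> and by \<open>gauss_coeff_add\<close>, respectively.\<close>

lemma gauss_kernel_replicate_form:
  assumes gauss: "is_gauss_kernel a F" and \<xi>: "\<forall>k\<ge>N. \<xi> k = 0" and rn: "r \<le> n"
  shows "of_nat (n choose r) *
      (\<Sum>ys\<in>lists_len {..<N} (n - r). F n (replicate r N @ ys) * prod_list (map \<xi> ys)) =
    gauss_coeff r (complex_of_real (1 - a N)) *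
      gauss_coeff (n - r) (\<Sum>k<N. complex_of_real (1 - a k) * (\<xi> k)\<^sup>2)"
proof -
  define q where "q = complex_of_real (1 - a N)"
  define Q where "Q = (\<Sum>k<N. complex_of_real (1 - a k) * (\<xi> k)\<^sup>2)"
  define c where "c i = of_nat (n choose i) *
      (\<Sum>ys\<in>lists_len {..<N} (n - i). F n (replicate i N @ ys) * prod_list (map \<xi> ys))
    - gauss_coeff i q * gauss_coeff (n - i) Q" for i
  have "(\<Sum>i\<le>n. c i * x ^ i) = 0" for x
  proof -
    have upd: "\<forall>k\<ge>Suc N. (\<xi>(N := x)) k = 0" using \<xi> by auto
    have "(\<Sum>i\<le>n. (of_nat (n choose i) *
          (\<Sum>ys\<in>lists_len {..<N} (n - i). F n (replicate i N @ ys) * prod_list (map \<xi> ys))) * x ^ i)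
        = (\<Sum>ks\<in>lists_len (insert N {..<N}) n. F n ks * prod_list (map (\<xi>(N := x)) ks))"
      by (rule sum_lists_len_insert_fun_upd[symmetric]) (auto intro: gauss_kernel_sym[OF gauss])
    also have "\<dots> = gauss_coeff n (\<Sum>k<Suc N. complex_of_real (1 - a k) * ((\<xi>(N := x)) k)\<^sup>2)"
      using gauss_kernel_form[OF gauss upd] by (simp only: lessThan_Suc)
    also have "\<dots> = gauss_coeff n (Q + q * x\<^sup>2)"
      by (simp add: Q_def q_def)
    also have "\<dots> = (\<Sum>i\<le>n. (gauss_coeff i q * gauss_coeff (n - i) Q) * x ^ i)"
      by (rule gauss_coeff_add)
    finally show ?thesis
      unfolding c_def by (simp add: left_diff_distrib sum_subtractf)
  qed
  then have "c r = 0"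
    using polyfun_eq_0[of c n] rn by blast
  then show ?thesis
    unfolding c_def q_def Q_def by simp
qed

lemma gauss_kernel_replicate:
  assumes gauss: "is_gauss_kernel a F" and ks: "ks \<in> lists_len {..<N} (n - r)" and rn: "r \<le> n"
  shows "of_nat (n choose r) * F n (replicate r N @ ks) =
    gauss_coeff r (complex_of_real (1 - a N)) * F (n - r) ks"
proof -
  define q where "q = complex_of_real (1 - a N)"
  define D where "D ys = of_nat (n choose r) * F n (replicate r N @ ys) - gauss_coeff r q * F (n - r) ys"
    for ys
  have "D ks = 0"
  proof (rule symmetric_form_eq_0_imp_coeff_eq_0[OF _ _ ks])
    show "D xs = D ys" if "mset xs = mset ys" for xs ys
      unfolding D_def using that gauss_kernel_sym[OF gauss, of "replicate r N @ xs" "replicate r N @ ys"]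
        gauss_kernel_sym[OF gauss, of xs ys] by simp
    fix \<xi> :: "nat \<Rightarrow> complex" assume \<xi>: "\<forall>k\<ge>N. \<xi> k = 0"
    have "(\<Sum>ys\<in>lists_len {..<N} (n - r). D ys * prod_list (map \<xi> ys)) =
        of_nat (n choose r) *
          (\<Sum>ys\<in>lists_len {..<N} (n - r). F n (replicate r N @ ys) * prod_list (map \<xi> ys)) -
        gauss_coeff r q * (\<Sum>ys\<in>lists_len {..<N} (n - r). F (n - r) ys * prod_list (map \<xi> ys))"
      unfolding D_def by (simp add: left_diff_distrib sum_subtractf sum_distrib_left mult.assoc)
    also have "\<dots> = 0"
      unfolding gauss_kernel_replicate_form[OF gauss \<xi> rn] gauss_kernel_form[OF gauss \<xi>] q_def
      by simp
    finally show "(\<Sum>ys\<in>lists_len {..<N} (n - r). D ys * prod_list (map \<xi> ys)) = 0" .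
  qed
  then show ?thesis
    unfolding D_def q_def by simp
qed

section \<open>Generating function of the chaos norms\<close>

definition trunc_norm2 :: "(nat \<Rightarrow> nat list \<Rightarrow> complex) \<Rightarrow> nat \<Rightarrow> nat \<Rightarrow> real" where
  "trunc_norm2 F N n = (\<Sum>ks\<in>lists_len {..<N} n. (cmod (F n ks))\<^sup>2)"

definition gauss_weight :: "real \<Rightarrow> nat \<Rightarrow> real" where
  "gauss_weight q r = fact r * (cmod (gauss_coeff r (complex_of_real q)))\<^sup>2"

lemma trunc_norm2_nonneg: "0 \<le> trunc_norm2 F N n"
  unfolding trunc_norm2_def by (intro sum_nonneg) auto

lemma gauss_weight_nonneg: "0 \<le> gauss_weight q r"
  unfolding gauss_weight_def by simp

lemma fact_double_div: "fact (2 * i) / (fact i)\<^sup>2 / 4 ^ i = ((- 1/2 :: real) gchoose i) * (- 1) ^ i"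
proof -
  have "(2 :: real) ^ (2 * i) = 4 ^ i"
    by (simp add: power_mult)
  moreover have "((- 1/2 :: real) gchoose i) * (- 1) ^ i = pochhammer (1/2) i / fact i"
    by (simp add: gbinomial_pochhammer mult_ac flip: power_mult_distrib)
  ultimately show ?thesis
    unfolding fact_double[where 'a=real] by (simp add: power2_eq_square)
qed

lemma gauss_weight_sums:
  assumes sq: "\<bar>s * q\<bar> < 1"
  shows "(\<lambda>r. gauss_weight q r * s ^ r) sums ((1 - s\<^sup>2 * q\<^sup>2) powr (- 1/2))"
proof (rule sums_even_terms)
  have "\<bar>- (s\<^sup>2 * q\<^sup>2)\<bar> < 1"
    using sq by (simp add: abs_square_less_1 flip: power_mult_distrib)
  then have "(\<lambda>i. ((- 1/2 :: real) gchoose i) * (- (s\<^sup>2 * q\<^sup>2)) ^ i) sums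
      (1 + - (s\<^sup>2 * q\<^sup>2)) powr (- 1/2)"
    by (rule gen_binomial_real)
  moreover have "gauss_weight q (2 * i) * s ^ (2 * i) = ((- 1/2 :: real) gchoose i) * (- (s\<^sup>2 * q\<^sup>2)) ^ i"
    for i
  proof -
    have "cmod (gauss_coeff (2 * i) (complex_of_real q)) = \<bar>q / 2\<bar> ^ i / fact i"
      unfolding gauss_coeff_def by (simp add: norm_divide norm_power)
    then have "gauss_weight q (2 * i) = fact (2 * i) * (\<bar>q / 2\<bar> ^ i)\<^sup>2 / (fact i)\<^sup>2"
      unfolding gauss_weight_def by (simp add: power_divide power_mult_distrib)
    also have "(\<bar>q / 2\<bar> ^ i)\<^sup>2 = (\<bar>q / 2\<bar>\<^sup>2) ^ i"
      by (metis power_mult mult.commute)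
    also have "\<dots> = (q\<^sup>2) ^ i / 4 ^ i"
      by (simp add: power_divide)
    finally have "gauss_weight q (2 * i) = (fact (2 * i) / (fact i)\<^sup>2 / 4 ^ i) * (q\<^sup>2) ^ i"
      by simp
    moreover have "s ^ (2 * i) = (s\<^sup>2) ^ i"
      by (simp add: power_mult)
    moreover have "(- (s\<^sup>2 * q\<^sup>2)) ^ i = (- 1) ^ i * (q\<^sup>2) ^ i * (s\<^sup>2) ^ i"
      by (simp add: mult_ac flip: power_mult_distrib)
    ultimately show ?thesis
      unfolding fact_double_div by (simp only: mult_ac)
  qed
  ultimately show "(\<lambda>i. gauss_weight q (2 * i) * s ^ (2 * i)) sums (1 - s\<^sup>2 * q\<^sup>2) powr (- 1/2)"
    by simp
qed (simp add: gauss_weight_def)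

lemma trunc_norm2_Suc:
  assumes gauss: "is_gauss_kernel a F"
  shows "trunc_norm2 F (Suc N) n = (\<Sum>r\<le>n.
    (cmod (gauss_coeff r (complex_of_real (1 - a N))))\<^sup>2 / of_nat (n choose r) * trunc_norm2 F N (n - r))"
proof -
  define q where "q r = gauss_coeff r (complex_of_real (1 - a N))" for r
  have "trunc_norm2 F (Suc N) n = (\<Sum>r\<le>n. of_nat (n choose r) *
      (\<Sum>ys\<in>lists_len {..<N} (n - r). (cmod (F n (replicate r N @ ys)))\<^sup>2))"
    unfolding trunc_norm2_def lessThan_Suc
    by (rule sum_lists_len_insert) (auto dest: gauss_kernel_sym[OF gauss, of _ _ n])
  also have "\<dots> = (\<Sum>r\<le>n. (cmod (q r))\<^sup>2 / of_nat (n choose r) * trunc_norm2 F N (n - r))"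
  proof (intro sum.cong refl)
    fix r assume r: "r \<in> {..n}"
    have "of_nat (n choose r) * (cmod (F n (replicate r N @ ys)))\<^sup>2 =
          (cmod (q r))\<^sup>2 / of_nat (n choose r) * (cmod (F (n - r) ys))\<^sup>2"
      if "ys \<in> lists_len {..<N} (n - r)" for ys
    proof -
      have "real (n choose r) * cmod (F n (replicate r N @ ys)) = cmod (q r) * cmod (F (n - r) ys)"
        using arg_cong[OF gauss_kernel_replicate[OF gauss that], of cmod] r
        by (simp add: norm_mult q_def)
      then have "(real (n choose r) * cmod (F n (replicate r N @ ys)))\<^sup>2 =
          (cmod (q r) * cmod (F (n - r) ys))\<^sup>2"
        by simp
      then show ?thesis
        using r by (simp add: field_simps power_mult_distrib power2_eq_square)
    qed
    then show "of_nat (n choose r) * (\<Sum>ys\<in>lists_len {..<N} (n - r). (cmod (F n (replicate r N @ ys)))\<^sup>2) =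
        (cmod (q r))\<^sup>2 / of_nat (n choose r) * trunc_norm2 F N (n - r)"
      unfolding trunc_norm2_def sum_distrib_left by (rule sum.cong[OF refl])
  qed
  finally show ?thesis
    unfolding q_def .
qed

lemma fact_trunc_norm2_Suc:
  assumes gauss: "is_gauss_kernel a F"
  shows "fact n * trunc_norm2 F (Suc N) n * s ^ n = (\<Sum>r\<le>n.
    (gauss_weight (1 - a N) r * s ^ r) * (fact (n - r) * trunc_norm2 F N (n - r) * s ^ (n - r)))"
  unfolding trunc_norm2_Suc[OF gauss] sum_distrib_left sum_distrib_right
proof (intro sum.cong refl)
  fix r assume "r \<in> {..n}"
  then have "(fact n :: real) = real (n choose r) * (fact r * fact (n - r))"
    using binomial_fact_lemma[of r n] by (metis atMost_iff mult.commute of_nat_fact of_nat_mult)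
  moreover have "s ^ n = s ^ r * s ^ (n - r)"
    using \<open>r \<in> {..n}\<close> by (simp flip: power_add)
  moreover have "real (n choose r) \<noteq> 0"
    using \<open>r \<in> {..n}\<close> by simp
  ultimately show "fact n * ((cmod (gauss_coeff r (complex_of_real (1 - a N))))\<^sup>2 /
        of_nat (n choose r) * trunc_norm2 F N (n - r)) * s ^ n =
      gauss_weight (1 - a N) r * s ^ r * (fact (n - r) * trunc_norm2 F N (n - r) * s ^ (n - r))"
    unfolding gauss_weight_def by (simp add: field_simps)
qed

lemma unit_factor_bounds:
  fixes q s :: real
  assumes "\<bar>q\<bar> \<le> 1" and "\<bar>s\<bar> \<le> 1"
  shows "0 \<le> 1 - s\<^sup>2 * q\<^sup>2 \<and> 1 - s\<^sup>2 * q\<^sup>2 \<le> 1"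
proof -
  have "\<bar>s * q\<bar> \<le> 1"
    using assms by (simp add: abs_mult mult_le_one)
  then have "(s * q)\<^sup>2 \<le> 1"
    by (simp add: abs_square_le_1)
  then show ?thesis
    by (simp add: power_mult_distrib)
qed

lemma trunc_norm2_generating:
  assumes gauss: "is_gauss_kernel a F" and eig: "\<And>k. 0 < a k \<and> a k < 2"
    and s: "0 \<le> s" "s \<le> 1"
  shows "(\<lambda>n. fact n * trunc_norm2 F N n * s ^ n) sums
    ((\<Prod>k<N. 1 - s\<^sup>2 * (1 - a k)\<^sup>2) powr (- 1/2))"
proof (induction N)
  case 0
  have "lists_len {..<0::nat} (Suc m) = {}" for m
    unfolding lists_len_def by (auto simp: length_Suc_conv)
  then have "fact n * trunc_norm2 F 0 n * s ^ n = (if n = 0 then 1 else 0)" for n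
    using gauss_kernel_Nil[OF gauss] by (cases n) (auto simp: trunc_norm2_def)
  then show ?case
    using sums_single[of 0 "\<lambda>_. 1::real"] by simp
next
  case (Suc N)
  define q where "q = 1 - a N"
  have q: "\<bar>q\<bar> < 1" using eig[of N] unfolding q_def by auto
  have sq: "\<bar>s * q\<bar> < 1"
    using q s by (simp add: abs_mult mult_le_less_imp_less le_less_trans[OF mult_left_le_one_le])
  have G: "(\<lambda>r. gauss_weight q r * s ^ r) sums ((1 - s\<^sup>2 * q\<^sup>2) powr (- 1/2))"
    by (rule gauss_weight_sums[OF sq])
  have factors: "0 \<le> 1 - s\<^sup>2 * (1 - a k)\<^sup>2" for k
    using unit_factor_bounds[of "1 - a k" s] eig[of k] s by auto
  have "(\<lambda>n. \<Sum>r\<le>n. (gauss_weight q r * s ^ r) * (fact (n - r) * trunc_norm2 F N (n - r) * s ^ (n - r)))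
      sums ((\<Sum>r. gauss_weight q r * s ^ r) * (\<Sum>n. fact n * trunc_norm2 F N n * s ^ n))"
  proof (rule Cauchy_product_sums)
    show "summable (\<lambda>r. norm (gauss_weight q r * s ^ r))"
      using sums_summable[OF G] gauss_weight_nonneg s by (simp add: abs_mult)
    show "summable (\<lambda>n. norm (fact n * trunc_norm2 F N n * s ^ n))"
      using sums_summable[OF Suc.IH] trunc_norm2_nonneg s by (simp add: abs_mult)
  qed
  moreover have "(\<Sum>r. gauss_weight q r * s ^ r) * (\<Sum>n. fact n * trunc_norm2 F N n * s ^ n) =
      (\<Prod>k<Suc N. 1 - s\<^sup>2 * (1 - a k)\<^sup>2) powr (- 1/2)"
    using sums_unique[OF G] sums_unique[OF Suc.IH] factors[of N] prod_nonneg[of "{..<N}", OF factors]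
    by (simp add: powr_mult q_def mult_ac)
  moreover note fact_trunc_norm2_Suc[OF gauss, of _ N s, folded q_def, symmetric]
  ultimately show ?case by simp
qed

lemma trunc_norm2_mono: "N \<le> M \<Longrightarrow> trunc_norm2 F N n \<le> trunc_norm2 F M n"
  unfolding trunc_norm2_def by (rule sum_mono2[OF finite_lists_len lists_len_mono]) auto

lemma finite_subset_lists_len_lessThan:
  fixes E :: "nat list set"
  assumes "finite E" and "E \<subseteq> {ks. length ks = n}"
  shows "\<exists>N. E \<subseteq> lists_len {..<N} n"
proof
  define N where "N = Suc (Max (insert 0 (\<Union>ks\<in>E. set ks)))"
  have "k < N" if "ks \<in> E" "k \<in> set ks" for ks k
    using that assms(1) unfolding N_def by (intro le_imp_less_Suc Max_ge) auto
  then show "E \<subseteq> lists_len {..<N} n"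
    using assms(2) unfolding lists_len_def by auto
qed

lemma exhaustion_sums_tendsto_infsum:
  fixes f :: "'a \<Rightarrow> real"
  assumes nonneg: "\<And>x. x \<in> A \<Longrightarrow> 0 \<le> f x"
    and E: "\<And>N. finite (E N)" "\<And>N. E N \<subseteq> A" "incseq E"
    and exhaust: "\<And>D. finite D \<Longrightarrow> D \<subseteq> A \<Longrightarrow> \<exists>N. D \<subseteq> E N"
    and bound: "\<And>N. sum f (E N) \<le> C"
  shows "f summable_on A" and "(\<lambda>N. sum f (E N)) \<longlonglongrightarrow> infsum f A"
proof -
  define T where "T = (SUP N. sum f (E N))"
  have bdd: "bdd_above (range (\<lambda>N. sum f (E N)))"
    using bound by (rule bdd_aboveI2)
  have sum_le_T: "sum f D \<le> T" if fin: "finite D" and sub: "D \<subseteq> A" for D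
  proof -
    obtain N where N: "D \<subseteq> E N"
      using exhaust[OF fin sub] by blast
    have "sum f D \<le> sum f (E N)"
      by (rule sum_mono2[OF E(1) N]) (use N E(2) nonneg in blast)
    also have "\<dots> \<le> T"
      unfolding T_def by (rule cSUP_upper[OF _ bdd]) simp
    finally show ?thesis .
  qed
  then have bdd_finite: "bdd_above (sum f ` {D. finite D \<and> D \<subseteq> A})"
    by (intro bdd_aboveI2[where M=T]) auto
  show sm: "f summable_on A"
  proof (rule nonneg_bdd_above_summable_on)
    show "bdd_above (sum f ` {D. D \<subseteq> A \<and> finite D})"
      using bdd_finite by (simp add: conj_commute)
  qed (use nonneg in auto)
  have infsum_eq: "infsum f A = (SUP D\<in>{D. finite D \<and> D \<subseteq> A}. sum f D)"
    by (rule infsum_nonneg_is_SUPREMUM_real[OF sm nonneg])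
  have "T = infsum f A"
  proof (rule antisym)
    show "T \<le> infsum f A"
      unfolding T_def infsum_eq
      by (rule cSUP_least) (auto intro!: cSUP_upper[OF _ bdd_finite] E(1,2))
    show "infsum f A \<le> T"
      unfolding infsum_eq by (rule cSUP_least) (auto intro: sum_le_T)
  qed
  moreover have "incseq (\<lambda>N. sum f (E N))"
  proof (rule incseq_SucI)
    show "sum f (E N) \<le> sum f (E (Suc N))" for N
      using E nonneg incseq_SucD[OF E(3), of N] by (intro sum_mono2) auto
  qed
  then have "(\<lambda>N. sum f (E N)) \<longlonglongrightarrow> T"
    unfolding T_def by (rule LIMSEQ_incseq_SUP[OF bdd])
  ultimately show "(\<lambda>N. sum f (E N)) \<longlonglongrightarrow> infsum f A"
    by simp
qed

lemma kernel_norm2_trunc_limit: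
  assumes bound: "\<And>N. trunc_norm2 F N n \<le> C"
  shows "(\<lambda>ks. (cmod (F n ks))\<^sup>2) summable_on {ks. length ks = n}"
    and "(\<lambda>N. trunc_norm2 F N n) \<longlonglongrightarrow> kernel_norm2 F n"
proof -
  have "incseq (\<lambda>N. lists_len {..<N} n)"
    by (auto simp: incseq_def intro!: lists_len_mono)
  moreover have "lists_len {..<N} n \<subseteq> {ks. length ks = n}" for N
    unfolding lists_len_def by auto
  note exhaustion_sums_tendsto_infsum[OF _ finite_lists_len[OF finite_lessThan] this calculation
      finite_subset_lists_len_lessThan bound[unfolded trunc_norm2_def]]
  then show "(\<lambda>ks. (cmod (F n ks))\<^sup>2) summable_on {ks. length ks = n}"
    and "(\<lambda>N. trunc_norm2 F N n) \<longlonglongrightarrow> kernel_norm2 F n"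
    unfolding trunc_norm2_def kernel_norm2_def by auto
qed

lemma sums_incseq_limit:
  fixes u :: "nat \<Rightarrow> nat \<Rightarrow> real"
  assumes nonneg: "\<And>N n. 0 \<le> u N n" and inc: "\<And>N n. u N n \<le> u (Suc N) n"
    and lim: "\<And>n. (\<lambda>N. u N n) \<longlonglongrightarrow> w n"
    and S: "\<And>N. (\<lambda>n. u N n) sums S N" and S_lim: "S \<longlonglongrightarrow> T"
  shows "w sums T"
proof -
  have "incseq (\<lambda>N. u N n)" for n
    using inc by (rule incseq_SucI)
  then have u_le_w: "u N n \<le> w n" for N n
    using incseq_le lim by blast
  have w_nonneg: "0 \<le> w n" for n
    using nonneg[of 0 n] u_le_w[of 0 n] by linarith
  have S_le_T: "S N \<le> T" for N
    by (rule incseq_le[OF incseq_SucI S_lim]) (use sums_le[OF _ S S] inc in blast)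
  have partial: "(\<Sum>n<M. w n) \<le> T" for M
  proof (rule LIMSEQ_le_const2[OF tendsto_sum[OF lim]])
    show "\<exists>N0. \<forall>N\<ge>N0. (\<Sum>n<M. u N n) \<le> T"
    proof (intro exI allI impI)
      fix N
      have "(\<Sum>n<M. u N n) \<le> S N"
        using sum_le_suminf[OF sums_summable[OF S[of N]], of "{..<M}"] nonneg sums_unique[OF S[of N]]
        by auto
      then show "(\<Sum>n<M. u N n) \<le> T"
        using S_le_T[of N] by linarith
    qed
  qed
  have "(\<Sum>n\<le>M. w n) \<le> T" for M
    using partial[of "Suc M"] by (simp add: lessThan_Suc_atMost)
  then have sw: "summable w"
    by (rule bounded_imp_summable[OF w_nonneg])
  have "suminf w \<le> T"
    by (rule suminf_le_const[OF sw partial])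
  moreover have "T \<le> suminf w"
    using suminf_le[OF u_le_w sums_summable[OF S] sw] sums_unique[OF S]
    by (intro LIMSEQ_le_const2[OF S_lim]) auto
  ultimately show ?thesis
    using summable_sums[OF sw] by simp
qed

lemma prod_unit_interval_limit:
  fixes f :: "nat \<Rightarrow> real"
  assumes "\<And>k. 0 \<le> f k \<and> f k \<le> 1"
  shows "(\<lambda>N. \<Prod>k<N. f k) \<longlonglongrightarrow> lim (\<lambda>N. \<Prod>k<N. f k)"
    and "lim (\<lambda>N. \<Prod>k<N. f k) \<le> (\<Prod>k<N. f k)"
proof -
  have dec: "decseq (\<lambda>N. \<Prod>k<N. f k)"
  proof (rule decseq_SucI)
    fix N
    have "(\<Prod>k<N. f k) * f N \<le> (\<Prod>k<N. f k) * 1"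
      using assms by (intro mult_left_mono prod_nonneg) auto
    then show "(\<Prod>k<Suc N. f k) \<le> (\<Prod>k<N. f k)" by simp
  qed
  then obtain L where L: "(\<lambda>N. \<Prod>k<N. f k) \<longlonglongrightarrow> L" "\<forall>i. L \<le> (\<Prod>k<i. f k)"
    using decseq_convergent[OF dec, of 0] assms by (auto intro: prod_nonneg)
  then show "(\<lambda>N. \<Prod>k<N. f k) \<longlonglongrightarrow> lim (\<lambda>N. \<Prod>k<N. f k)"
    and "lim (\<lambda>N. \<Prod>k<N. f k) \<le> (\<Prod>k<N. f k)"
    using limI[OF L(1)] by auto
qed

text \<open>Letting \<open>N \<rightarrow> \<infinity>\<close> in \<open>trunc_norm2_generating\<close>: each coefficient bound
  \<open>trunc_norm2 F N n \<le> L powr (-1/2) / s ^ n\<close> gives convergence of the truncated norms,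
  and monotone convergence passes to the limit in the series.\<close>

lemma chaos_norm2_generating:
  assumes gauss: "is_gauss_kernel a F" and eig: "\<And>k. 0 < a k \<and> a k < 2"
    and s: "0 < s" "s \<le> 1"
    and pos: "lim (\<lambda>N. \<Prod>k<N. 1 - s\<^sup>2 * (1 - a k)\<^sup>2) > 0"
  shows "sq_integrable_kernels F"
    and "(\<lambda>n. fact n * kernel_norm2 F n * s ^ n) sums
      (lim (\<lambda>N. \<Prod>k<N. 1 - s\<^sup>2 * (1 - a k)\<^sup>2)) powr (- 1/2)"
proof -
  define P where "P N = (\<Prod>k<N. 1 - s\<^sup>2 * (1 - a k)\<^sup>2)" for N
  define L where "L = lim P"
  have "0 \<le> 1 - s\<^sup>2 * (1 - a k)\<^sup>2 \<and> 1 - s\<^sup>2 * (1 - a k)\<^sup>2 \<le> 1" for k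
    using unit_factor_bounds[of "1 - a k" s] eig[of k] s by auto
  from prod_unit_interval_limit[OF this]
  have P_lim: "P \<longlonglongrightarrow> L" and L_le: "\<And>N. L \<le> P N"
    unfolding P_def L_def by auto
  have L_pos: "L > 0" using pos unfolding L_def P_def .
  have G: "(\<lambda>n. fact n * trunc_norm2 F N n * s ^ n) sums (P N powr (- 1/2))" for N
    unfolding P_def by (rule trunc_norm2_generating[OF gauss eig]) (use s in auto)
  have bound: "trunc_norm2 F N n \<le> L powr (- 1/2) / s ^ n" for N n
  proof -
    have "fact n * trunc_norm2 F N n * s ^ n \<le> P N powr (- 1/2)"
      using sum_le_suminf[OF sums_summable[OF G[of N]], of "{n}"] sums_unique[OF G[of N]]
        trunc_norm2_nonneg s by simp
    also have "\<dots> \<le> L powr (- 1/2)"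
      by (rule powr_mono2') (use L_pos L_le in auto)
    finally have "fact n * trunc_norm2 F N n \<le> L powr (- 1/2) / s ^ n"
      using s by (simp add: field_simps)
    moreover have "trunc_norm2 F N n \<le> fact n * trunc_norm2 F N n"
      using trunc_norm2_nonneg[of F N n] by (simp add: mult_le_cancel_right1)
    ultimately show ?thesis by linarith
  qed
  show "sq_integrable_kernels F"
    unfolding sq_integrable_kernels_def using kernel_norm2_trunc_limit(1)[OF bound] by blast
  show "(\<lambda>n. fact n * kernel_norm2 F n * s ^ n) sums (lim (\<lambda>N. \<Prod>k<N. 1 - s\<^sup>2 * (1 - a k)\<^sup>2)) powr (- 1/2)"
    unfolding P_def[symmetric] L_def[symmetric]
  proof (rule sums_incseq_limit[OF _ _ _ G])
    show "0 \<le> fact n * trunc_norm2 F N n * s ^ n" for N n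
      using trunc_norm2_nonneg s by simp
    show "fact n * trunc_norm2 F N n * s ^ n \<le> fact n * trunc_norm2 F (Suc N) n * s ^ n" for N n
      using trunc_norm2_mono[of N "Suc N"] s by (simp add: mult_right_mono)
    show "(\<lambda>N. fact n * trunc_norm2 F N n * s ^ n) \<longlonglongrightarrow> fact n * kernel_norm2 F n * s ^ n" for n
      by (intro tendsto_intros kernel_norm2_trunc_limit(2)[OF bound])
    show "(\<lambda>N. P N powr (- 1/2)) \<longlonglongrightarrow> L powr (- 1/2)"
      by (rule tendsto_powr[OF P_lim tendsto_const]) (use L_pos in auto)
  qed
qed

lemma gauss_kernel_in_L2:
  assumes gauss: "is_gauss_kernel a F" and eig: "\<And>k. 0 < a k \<and> a k < 2"
    and pos: "0 < det_2A_A2 a"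
  shows "in_L2 F"
proof -
  have "(\<lambda>N. \<Prod>k<N. 1 - 1\<^sup>2 * (1 - a k)\<^sup>2) = (\<lambda>N. \<Prod>k<N. 2 * a k - (a k)\<^sup>2)"
    by (simp add: power2_eq_square algebra_simps)
  then have "lim (\<lambda>N. \<Prod>k<N. 1 - 1\<^sup>2 * (1 - a k)\<^sup>2) > 0"
    using pos unfolding det_2A_A2_def by simp
  from chaos_norm2_generating[OF gauss eig _ _ this] show ?thesis
    unfolding in_L2_def by (auto dest: sums_summable)
qed

definition powser_diffs :: "(nat \<Rightarrow> real) \<Rightarrow> nat \<Rightarrow> real \<Rightarrow> real" where
  "powser_diffs c m x = (\<Sum>p. (diffs ^^ m) c p * x ^ p)"

lemma summable_diffs_funpow:
  fixes c :: "nat \<Rightarrow> real"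
  assumes sm: "\<And>x. \<bar>x\<bar> < 1 \<Longrightarrow> summable (\<lambda>p. c p * x ^ p)" and x: "\<bar>x\<bar> < 1"
  shows "summable (\<lambda>p. (diffs ^^ m) c p * x ^ p)"
  using x
proof (induction m arbitrary: x)
  case 0
  then show ?case using sm by simp
next
  case (Suc m)
  have "summable (\<lambda>p. diffs ((diffs ^^ m) c) p * x ^ p)"
    by (rule termdiff_converges[of x 1]) (use Suc in auto)
  then show ?case by simp
qed

lemma powser_diffs_deriv:
  assumes sm: "\<And>x. \<bar>x\<bar> < 1 \<Longrightarrow> summable (\<lambda>p. c p * x ^ p)" and x: "\<bar>x\<bar> < 1"
  shows "(powser_diffs c m has_real_derivative powser_diffs c (Suc m) x) (at x)"
proof -
  define K where "K = (1 + \<bar>x\<bar>) / 2"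
  have K: "\<bar>K\<bar> < 1" "\<bar>x\<bar> < \<bar>K\<bar>"
    using x unfolding K_def by auto
  have "summable (\<lambda>p. (diffs ^^ m) c p * K ^ p)"
    by (rule summable_diffs_funpow[OF sm K(1)])
  from termdiffs_strong[OF this, of x] K(2) show ?thesis
    unfolding powser_diffs_def by simp
qed

lemma iter_deriv_on_powser_diffs:
  assumes sm: "\<And>x. \<bar>x\<bar> < 1 \<Longrightarrow> summable (\<lambda>p. c p * x ^ p)"
  shows "iter_deriv_on m (powser_diffs c k) {0<..<1} (powser_diffs c (k + m))"
proof (induction m arbitrary: k)
  case 0
  then show ?case by simp
next
  case (Suc m)
  have "\<forall>x\<in>{0<..<1}. (powser_diffs c k has_real_derivative powser_diffs c (Suc k) x) (at x)"
    using powser_diffs_deriv[OF sm] by auto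
  moreover have "iter_deriv_on m (powser_diffs c (Suc k)) {0<..<1} (powser_diffs c (k + Suc m))"
    using Suc.IH[of "Suc k"] by simp
  ultimately show ?case by auto
qed

lemma iter_deriv_on_unique:
  assumes "open S" and "iter_deriv_on m g1 S h1" and "iter_deriv_on m g2 S h2"
    and "\<forall>x\<in>S. g1 x = g2 x" and "x \<in> S"
  shows "h1 x = h2 x"
  using assms(2-4)
proof (induction m arbitrary: g1 g2)
  case 0
  then show ?case using assms(5) by simp
next
  case (Suc m)
  obtain g1' where g1': "\<forall>x\<in>S. (g1 has_real_derivative g1' x) (at x)" "iter_deriv_on m g1' S h1"
    using Suc.prems(1) by auto
  obtain g2' where g2': "\<forall>x\<in>S. (g2 has_real_derivative g2' x) (at x)" "iter_deriv_on m g2' S h2"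
    using Suc.prems(2) by auto
  have "g1' y = g2' y" if y: "y \<in> S" for y
  proof -
    have "(g1 has_real_derivative g2' y) (at y)"
      by (rule has_field_derivative_transform_within_open[OF _ assms(1) y])
        (use g2' y Suc.prems(3) in auto)
    then show ?thesis
      using g1' y DERIV_unique by blast
  qed
  then show ?case
    using Suc.IH[OF g1'(2) g2'(2)] by blast
qed

lemma diffs_funpow_eq: "(diffs ^^ m) c p = pochhammer (of_nat (Suc p)) m * c (p + m)"
proof (induction m arbitrary: p)
  case 0
  then show ?case by simp
next
  case (Suc m)
  then show ?case
    by (simp add: diffs_def pochhammer_rec add_ac mult_ac)
qed

lemma power_le_pochhammer:
  fixes x :: real
  assumes "0 \<le> x"
  shows "x ^ m \<le> pochhammer x m"
proof -
  have "x ^ m = (\<Prod>i<m. x)" by simp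
  also have "\<dots> \<le> (\<Prod>i<m. x + of_nat i)"
    by (rule prod_mono) (use assms in auto)
  finally show ?thesis
    by (simp add: pochhammer_prod atLeast0LessThan)
qed

lemma le_at_right_endpoint:
  fixes f :: "real \<Rightarrow> real"
  assumes "continuous_on {a..b} f" and "a < b" and "\<And>x. x \<in> {a<..<b} \<Longrightarrow> f x \<le> B"
  shows "f b \<le> B"
proof (rule tendsto_upperbound)
  show "(f \<longlongrightarrow> f b) (at_left b)"
    by (rule continuous_on_Icc_at_leftD[OF assms(1,2)])
  show "\<forall>\<^sub>F x in at_left b. f x \<le> B"
    using eventually_at_left_real[OF assms(2)] by eventually_elim (rule assms(3))
qed simp

lemma summable_if_powser_bounded:
  fixes d :: "nat \<Rightarrow> real"
  assumes nonneg: "\<And>p. 0 \<le> d p"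
    and sm: "\<And>x. x \<in> {0<..<1} \<Longrightarrow> summable (\<lambda>p. d p * x ^ p)"
    and bound: "\<And>x. x \<in> {0<..<1} \<Longrightarrow> (\<Sum>p. d p * x ^ p) \<le> B"
  shows "summable d"
proof (rule bounded_imp_summable[OF nonneg])
  fix P
  have partial_le: "(\<Sum>p\<le>P. d p * x ^ p) \<le> B" if x: "x \<in> {0<..<1}" for x
  proof -
    have "(\<Sum>p\<le>P. d p * x ^ p) \<le> (\<Sum>p. d p * x ^ p)"
      by (rule sum_le_suminf[OF sm[OF x]]) (use nonneg x in auto)
    then show ?thesis
      using bound[OF x] by linarith
  qed
  have "(\<lambda>x. \<Sum>p\<le>P. d p * x ^ p) 1 \<le> B"
    by (rule le_at_right_endpoint[of 0 1]) (auto intro!: continuous_intros partial_le)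
  then show "(\<Sum>p\<le>P. d p) \<le> B"
    by simp
qed

lemma summable_strict_mono_reindex:
  fixes d :: "nat \<Rightarrow> real"
  assumes sd: "summable d" and nonneg: "\<And>p. 0 \<le> d p" and g: "strict_mono g"
  shows "summable (\<lambda>n. d (g n))"
proof (rule bounded_imp_summable)
  show "0 \<le> d (g n)" for n
    using nonneg by simp
  fix n
  have "(\<Sum>k\<le>n. d (g k)) = (\<Sum>p\<in>g ` {..n}. d p)"
    using strict_mono_imp_inj_on[OF g] by (simp add: sum.reindex inj_on_subset)
  also have "\<dots> \<le> suminf d"
    by (rule sum_le_suminf[OF sd]) (use nonneg in auto)
  finally show "(\<Sum>k\<le>n. d (g k)) \<le> suminf d" .
qed

lemma summable_double_minus:
  fixes Y :: "nat \<Rightarrow> real"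
  assumes "summable Y" and "\<And>p. 0 \<le> Y p"
  shows "summable (\<lambda>n. Y (2 * n - m))"
proof -
  have "summable (\<lambda>n. Y (2 * n + m))"
    by (rule summable_strict_mono_reindex[OF assms]) (rule strict_monoI, simp)
  moreover have "(\<lambda>n. Y (2 * (n + m) - m)) = (\<lambda>n. Y (2 * n + m))"
    by (simp add: algebra_simps)
  ultimately show ?thesis
    by (subst summable_iff_shift[symmetric, of _ m]) simp
qed

section \<open>Fractional integrals of power series\<close>

lemma has_integral_power_mult_powr:
  fixes y b :: real
  assumes y: "0 < y" and b: "0 < b"
  shows "((\<lambda>t. t ^ p * (y - t) powr (b - 1)) has_integral (Beta (real p + 1) b * y powr (real p + b))) {0..y}"
proof -
  have "((\<lambda>t. t powr (real p + 1 - 1) * (1 - t) powr (b - 1)) has_integral Beta (real p + 1) b) {0..1}"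
    by (rule has_integral_Beta_real) (use b in auto)
  then have "((\<lambda>x. x powr (real p) * (1 - x) powr (b - 1)) has_integral Beta (real p + 1) b) {0..1}"
    by simp
  from has_integral_stretch_real[OF this, of "1 / y"] y
  have "((\<lambda>x. (x / y) powr (real p) * (1 - x / y) powr (b - 1)) has_integral y * Beta (real p + 1) b)
      ((\<lambda>x. x * y) ` {0..1})"
    by simp
  moreover have "(\<lambda>x. x * y) ` {0..1} = {0..y}"
    using y by (simp add: image_mult_atLeastAtMost_if')
  ultimately have "((\<lambda>x. (x / y) powr (real p) * (1 - x / y) powr (b - 1)) has_integral
      y * Beta (real p + 1) b) {0..y}"
    by simp
  from has_integral_mult_left[OF this, of "y powr (real p + b - 1)"]
  have "((\<lambda>x. (x / y) powr (real p) * (1 - x / y) powr (b - 1) * y powr (real p + b - 1))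
      has_integral (y * Beta (real p + 1) b * y powr (real p + b - 1))) {0..y}" .
  moreover have "y * Beta (real p + 1) b * y powr (real p + b - 1) = Beta (real p + 1) b * y powr (real p + b)"
    using y by (simp add: powr_diff)
  ultimately have scaled: "((\<lambda>x. (x / y) powr (real p) * (1 - x / y) powr (b - 1) * y powr (real p + b - 1))
      has_integral (Beta (real p + 1) b * y powr (real p + b))) {0..y}"
    by simp
  show ?thesis
  proof (rule has_integral_spike_finite[where S="{0}", OF _ _ scaled])
    fix x assume "x \<in> {0..y} - {0}"
    then have x: "0 < x" "x \<le> y" by auto
    have e1: "(x / y) powr (real p) = x ^ p / y powr (real p)"
      using x y by (simp add: powr_divide powr_realpow)
    have e2: "1 - x / y = (y - x) / y"
      using y by (simp add: field_simps)
    have e3: "((y - x) / y) powr (b - 1) = (y - x) powr (b - 1) / y powr (b - 1)"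
      using x y by (simp add: powr_divide)
    have e4: "y powr (real p + b - 1) = y powr (real p) * y powr (b - 1)"
      using y by (simp add: powr_add[symmetric] add_diff_eq)
    have "y powr (real p) > 0" "y powr (b - 1) > 0"
      using y by auto
    then show "x ^ p * (y - x) powr (b - 1) =
        (x / y) powr (real p) * (1 - x / y) powr (b - 1) * y powr (real p + b - 1)"
      unfolding e1 e2 e3 e4 by (simp add: field_simps)
  qed simp
qed

text \<open>Termwise integration is justified by monotone convergence.\<close>

lemma powser_fractional_integral_sums:
  fixes d :: "nat \<Rightarrow> real"
  assumes nonneg: "\<And>p. 0 \<le> d p" and sm: "\<And>x. \<bar>x\<bar> < 1 \<Longrightarrow> summable (\<lambda>p. d p * x ^ p)"
    and y: "0 < y" "y < 1" and b: "0 < b"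
    and int: "(\<lambda>t. (\<Sum>p. d p * t ^ p) * (y - t) powr (b - 1)) integrable_on {0..y}"
  shows "(\<lambda>p. d p * (Beta (real p + 1) b * y powr (real p + b))) sums
    integral {0..y} (\<lambda>t. (\<Sum>p. d p * t ^ p) * (y - t) powr (b - 1))"
proof -
  define g where "g t = (\<Sum>p. d p * t ^ p) * (y - t) powr (b - 1)" for t
  define f where "f k t = (\<Sum>p<k. d p * t ^ p) * (y - t) powr (b - 1)" for k t
  have f_int: "(f k has_integral (\<Sum>p<k. d p * (Beta (real p + 1) b * y powr (real p + b)))) {0..y}" for k
    unfolding f_def sum_distrib_right mult.assoc
    by (intro has_integral_sum has_integral_mult_right has_integral_power_mult_powr y b) auto
  have g_int: "g integrable_on {0..y}"
    using int unfolding g_def .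
  have term_nonneg: "0 \<le> d p * t ^ p" if "t \<in> {0..y}" for t p
    using that nonneg by simp
  have t_lt_1: "\<bar>t\<bar> < 1" if "t \<in> {0..y}" for t
    using that y by auto
  have f_le_g: "f k t \<le> g t" if t: "t \<in> {0..y}" for k t
  proof -
    have "(\<Sum>p<k. d p * t ^ p) \<le> (\<Sum>p. d p * t ^ p)"
      by (rule sum_le_suminf[OF sm[OF t_lt_1[OF t]]]) (use term_nonneg[OF t] in auto)
    then show ?thesis
      unfolding f_def g_def by (intro mult_right_mono) auto
  qed
  have "g integrable_on {0..y} \<and> (\<lambda>k. integral {0..y} (f k)) \<longlonglongrightarrow> integral {0..y} g"
  proof (rule monotone_convergence_increasing)
    show "f k integrable_on {0..y}" for k
      using f_int by blast
    show "f k t \<le> f (Suc k) t" if "t \<in> {0..y}" for k t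
      unfolding f_def using term_nonneg[OF that] by (intro mult_right_mono) auto
    show "(\<lambda>k. f k t) \<longlonglongrightarrow> g t" if "t \<in> {0..y}" for t
      unfolding f_def g_def by (intro tendsto_mult_right summable_LIMSEQ sm t_lt_1 that)
    have "\<bar>integral {0..y} (f k)\<bar> \<le> integral {0..y} g" for k
    proof -
      have "0 \<le> integral {0..y} (f k)"
        by (rule integral_nonneg)
          (use f_int nonneg in \<open>auto simp: f_def intro!: mult_nonneg_nonneg sum_nonneg\<close>)
      moreover have "integral {0..y} (f k) \<le> integral {0..y} g"
        by (rule integral_le) (use f_int g_int f_le_g in auto)
      ultimately show ?thesis by simp
    qed
    then show "bounded (range (\<lambda>k. integral {0..y} (f k)))"
      unfolding bounded_real by blast
  qed
  then show ?thesis
    unfolding sums_def g_def[symmetric] using integral_unique[OF f_int] by simp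
qed

text \<open>Log-convexity of \<open>\<Gamma>\<close> gives
  \<open>\<Gamma>(p + 1 - \<beta>) \<le> \<Gamma>(p + 1) powr (1 - \<beta>) * \<Gamma>(p) powr \<beta> = \<Gamma>(p + 1) / p powr \<beta>\<close>.\<close>

lemma powr_le_Gamma_ratio:
  fixes p \<beta> :: real
  assumes p: "1 \<le> p" and \<beta>: "0 < \<beta>" "\<beta> < 1"
  shows "p powr \<beta> \<le> Gamma (p + 1) / Gamma (p + 1 - \<beta>)"
proof -
  have "(ln \<circ> Gamma) ((1 - \<beta>) *\<^sub>R (p + 1) + \<beta> *\<^sub>R p) \<le>
      (1 - \<beta>) * (ln \<circ> Gamma) (p + 1) + \<beta> * (ln \<circ> Gamma) p"
    by (rule convex_onD[OF log_convex_Gamma_real]) (use p \<beta> in auto)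
  moreover have "(1 - \<beta>) *\<^sub>R (p + 1) + \<beta> *\<^sub>R p = p + 1 - \<beta>"
    by (simp add: algebra_simps)
  moreover have "ln (Gamma (p + 1)) = ln p + ln (Gamma p)"
  proof -
    have "p \<notin> \<int>\<^sub>\<le>\<^sub>0" using p by auto
    then have "Gamma (p + 1) = p * Gamma p" by (rule Gamma_plus1)
    moreover have "Gamma p > 0" using p by simp
    ultimately show ?thesis using p by (simp add: ln_mult_pos)
  qed
  ultimately have "ln (Gamma (p + 1 - \<beta>)) \<le> ln (Gamma (p + 1)) - \<beta> * ln p"
    by (simp add: algebra_simps)
  moreover have "Gamma (p + 1 - \<beta>) > 0"
    using p \<beta> by simp
  ultimately have "Gamma (p + 1 - \<beta>) \<le> exp (ln (Gamma (p + 1)) - \<beta> * ln p)"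
    by (metis exp_le_cancel_iff exp_ln)
  also have "\<dots> = Gamma (p + 1) / p powr \<beta>"
    using p by (simp add: exp_diff powr_def mult_ac)
  finally show ?thesis
    using p \<beta> by (simp add: field_simps)
qed

lemma Beta_plus1_mult_eq:
  fixes p b :: real
  assumes "0 \<le> p" and "0 < b"
  shows "Beta (p + 1) b * (p + b) / Gamma b = Gamma (p + 1) / Gamma (p + b)"
proof -
  have "p + b \<notin> \<int>\<^sub>\<le>\<^sub>0"
    using assms by (auto dest: nonpos_Ints_nonpos)
  then have "Gamma (p + b + 1) = (p + b) * Gamma (p + b)"
    by (rule Gamma_plus1)
  then have "Beta (p + 1) b = Gamma (p + 1) * Gamma b / ((p + b) * Gamma (p + b))"
    unfolding Beta_def by (simp add: algebra_simps)
  moreover have "A * B / (c * C) * c / B = A / C" if "B \<noteq> 0" "c \<noteq> 0" for A B C c :: real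
    using that by simp
  moreover have "Gamma b > 0" "p + b \<noteq> 0"
    using assms by auto
  ultimately show ?thesis
    by (metis less_irrefl)
qed

lemma deriv_le_if_diff_mono:
  fixes f g :: "real \<Rightarrow> real"
  assumes f: "(f has_real_derivative f') (at x)" and g: "(g has_real_derivative g') (at x)"
    and "x < c" and mono: "\<And>y. y \<in> {x<..<c} \<Longrightarrow> g y - g x \<le> f y - f x"
  shows "g' \<le> f'"
proof (rule ccontr)
  assume "\<not> g' \<le> f'"
  then have "f' - g' < 0" by simp
  from DERIV_neg_dec_right[OF DERIV_diff[OF f g] this]
  obtain \<delta> where "\<delta> > 0" and dec: "\<And>h. 0 < h \<Longrightarrow> h < \<delta> \<Longrightarrow> f x - g x > f (x + h) - g (x + h)"
    by blast
  define h where "h = min \<delta> (c - x) / 2"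
  have "0 < h" "h < \<delta>" "x + h \<in> {x<..<c}"
    using \<open>\<delta> > 0\<close> \<open>x < c\<close> unfolding h_def by (auto simp: min_def field_simps)
  then show False
    using dec mono by force
qed

text \<open>The partial sums \<open>Q\<close> of \<open>J\<close> satisfy \<open>J - Q\<close> nondecreasing, so \<open>Q' \<le> J' \<le> C\<close>; letting
  the point tend to \<open>1\<close> bounds the partial sums of the differentiated series.\<close>

lemma summable_if_powr_series_deriv_bounded:
  fixes u :: "nat \<Rightarrow> real"
  assumes nonneg: "\<And>p. 0 \<le> u p" and b: "0 < b"
    and J: "\<And>y. y \<in> {0<..<1} \<Longrightarrow> (\<lambda>p. u p * y powr (real p + b)) sums J y"
    and J_deriv: "\<And>x. x \<in> {0<..<1} \<Longrightarrow> \<exists>D\<le>C. (J has_real_derivative D) (at x)"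
  shows "summable (\<lambda>p. u p * (real p + b))"
proof (rule bounded_imp_summable)
  show "0 \<le> u p * (real p + b)" for p
    using nonneg b by simp
  fix P
  define Q where "Q y = (\<Sum>p<Suc P. u p * y powr (real p + b))" for y
  define DQ where "DQ y = (\<Sum>p<Suc P. u p * ((real p + b) * y powr (real p + b - 1)))" for y
  have Q_mono: "Q y2 - Q y1 \<le> J y2 - J y1" if y: "y1 \<in> {0<..<1}" "y2 \<in> {0<..<1}" "y1 \<le> y2"
    for y1 y2
  proof -
    have diff: "(\<lambda>p. u p * y2 powr (real p + b) - u p * y1 powr (real p + b)) sums (J y2 - J y1)"
      by (rule sums_diff[OF J J]) (use y in auto)
    have "0 \<le> u p * y2 powr (real p + b) - u p * y1 powr (real p + b)" for p
      using y b nonneg[of p] by (simp add: mult_left_mono powr_mono2 flip: right_diff_distrib)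
    then have "(\<Sum>p<Suc P. u p * y2 powr (real p + b) - u p * y1 powr (real p + b)) \<le> J y2 - J y1"
      using sum_le_suminf[OF sums_summable[OF diff], of "{..<Suc P}"] sums_unique[OF diff] by simp
    then show ?thesis
      unfolding Q_def by (simp add: sum_subtractf)
  qed
  have DQ_le: "DQ x \<le> C" if x: "x \<in> {0<..<1}" for x
  proof -
    obtain D where "D \<le> C" and D: "(J has_real_derivative D) (at x)"
      using J_deriv[OF x] by blast
    have "(Q has_real_derivative DQ x) (at x)"
      unfolding Q_def DQ_def using x by (intro DERIV_sum DERIV_cmult has_real_derivative_powr) auto
    then have "DQ x \<le> D"
      by (rule deriv_le_if_diff_mono[OF D _ _ Q_mono[OF x]]) (use x in auto)
    with \<open>D \<le> C\<close> show ?thesis by simp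
  qed
  have "DQ 1 \<le> C"
  proof (rule le_at_right_endpoint[of "1/2" 1])
    show "continuous_on {1/2..1} DQ"
      unfolding DQ_def by (intro continuous_intros) auto
  qed (auto intro: DQ_le)
  then show "(\<Sum>p\<le>P. u p * (real p + b)) \<le> C"
    unfolding DQ_def lessThan_Suc_atMost by simp
qed

text \<open>A Riemann-Liouville derivative only sees the function on \<open>(0, 1)\<close>.\<close>

lemma has_RL_deriv_integral:
  assumes RL: "has_RL_deriv \<beta> h x v" and x: "x \<in> {0<..<1}"
    and h: "\<And>t. t \<in> {0<..<1} \<Longrightarrow> h t = f t"
  shows "\<forall>y\<in>{0<..<1}. (\<lambda>t. f t * (y - t) powr (- \<beta>)) integrable_on {0..y}"
    and "((\<lambda>y. integral {0..y} (\<lambda>t. f t * (y - t) powr (- \<beta>))) has_real_derivative Gamma (1 - \<beta>) * v) (at x)"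
proof -
  obtain I where I: "\<And>y. y \<in> {0<..<1} \<Longrightarrow>
        (\<lambda>t. h t * (y - t) powr (- \<beta>)) absolutely_integrable_on {0..y} \<and>
        I y = integral {0..y} (\<lambda>t. h t * (y - t) powr (- \<beta>))"
      and I_deriv: "(I has_real_derivative (Gamma (1 - \<beta>) * v)) (at x)"
    using RL unfolding has_RL_deriv_def by blast
  have f_int: "((\<lambda>t. f t * (y - t) powr (- \<beta>)) has_integral I y) {0..y}" if y: "y \<in> {0<..<1}" for y
  proof (rule has_integral_spike_finite[where S="{0}"])
    show "((\<lambda>t. h t * (y - t) powr (- \<beta>)) has_integral I y) {0..y}"
      using I[OF y] set_lebesgue_integral_eq_integral(1) by (auto simp: integrable_integral)
    show "f t * (y - t) powr (- \<beta>) = h t * (y - t) powr (- \<beta>)" if "t \<in> {0..y} - {0}" for t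
      using that y h by auto
  qed simp
  then show "\<forall>y\<in>{0<..<1}. (\<lambda>t. f t * (y - t) powr (- \<beta>)) integrable_on {0..y}"
    by blast
  show "((\<lambda>y. integral {0..y} (\<lambda>t. f t * (y - t) powr (- \<beta>))) has_real_derivative Gamma (1 - \<beta>) * v) (at x)"
    by (rule has_field_derivative_transform_within_open[OF I_deriv _ x])
      (auto simp: integral_unique[OF f_int])
qed

lemma summable_powser_nonneg:
  fixes c :: "nat \<Rightarrow> real"
  assumes c: "\<And>p. 0 \<le> c p" and sm: "\<And>l. l \<in> {0<..<1} \<Longrightarrow> summable (\<lambda>p. c p * l ^ p)"
    and x: "\<bar>x\<bar> < 1"
  shows "summable (\<lambda>p. c p * x ^ p)"
proof -
  define l where "l = (1 + \<bar>x\<bar>) / 2"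
  have l: "l \<in> {0<..<1}" "\<bar>x\<bar> \<le> l"
    using x unfolding l_def by auto
  show ?thesis
  proof (rule summable_comparison_test'[OF sm[OF l(1)]])
    fix n
    have "\<bar>x\<bar> ^ n \<le> l ^ n"
      using l by (intro power_mono) auto
    then show "norm (c n * x ^ n) \<le> c n * l ^ n"
      using c[of n] by (simp add: abs_mult power_abs mult_left_mono)
  qed
qed

lemma iter_deriv_on_powser:
  fixes c :: "nat \<Rightarrow> real"
  assumes c: "\<And>p. 0 \<le> c p" and g: "\<And>l. l \<in> {0<..<1} \<Longrightarrow> (\<lambda>p. c p * l ^ p) sums g l"
    and h: "iter_deriv_on m g {0<..<1} h" and x: "x \<in> {0<..<1}"
  shows "h x = powser_diffs c m x"
proof (rule iter_deriv_on_unique[OF _ h _ _ x])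
  have "summable (\<lambda>p. c p * x ^ p)" if "\<bar>x\<bar> < 1" for x
    by (rule summable_powser_nonneg[OF c _ that]) (rule sums_summable[OF g])
  from iter_deriv_on_powser_diffs[OF this, of m 0]
  show "iter_deriv_on m (powser_diffs c 0) {0<..<1} (powser_diffs c m)"
    by simp
  show "\<forall>y\<in>{0<..<1}. g y = powser_diffs c 0 y"
    unfolding powser_diffs_def by (simp add: sums_unique[OF g])
qed simp

lemma diffs_funpow_nonneg: "(\<And>p. 0 \<le> c p) \<Longrightarrow> 0 \<le> (diffs ^^ m) c p" for c :: "nat \<Rightarrow> real"
  unfolding diffs_funpow_eq by (intro mult_nonneg_nonneg) (auto simp: pochhammer_prod intro!: prod_nonneg)

lemma summable_diffs_funpow_powser:
  fixes c :: "nat \<Rightarrow> real"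
  assumes c: "\<And>p. 0 \<le> c p" and g: "\<And>l. l \<in> {0<..<1} \<Longrightarrow> (\<lambda>p. c p * l ^ p) sums g l"
    and x: "\<bar>x\<bar> < 1"
  shows "summable (\<lambda>p. (diffs ^^ m) c p * x ^ p)"
  by (rule summable_diffs_funpow[OF summable_powser_nonneg[OF c] x])
    (use g sums_summable in blast)+

lemma summable_diffs_if_iter_deriv_bounded:
  fixes c :: "nat \<Rightarrow> real"
  assumes c: "\<And>p. 0 \<le> c p" and g: "\<And>l. l \<in> {0<..<1} \<Longrightarrow> (\<lambda>p. c p * l ^ p) sums g l"
    and bound: "\<And>x. x \<in> {0<..<1} \<Longrightarrow> \<exists>h. iter_deriv_on m g {0<..<1} h \<and> h x \<le> B"
  shows "summable ((diffs ^^ m) c)"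
proof (rule summable_if_powser_bounded)
  show "0 \<le> (diffs ^^ m) c p" for p
    using c by (rule diffs_funpow_nonneg)
  show "summable (\<lambda>p. (diffs ^^ m) c p * x ^ p)" if "x \<in> {0<..<1}" for x
    using that by (intro summable_diffs_funpow_powser[OF c g]) auto
  show "(\<Sum>p. (diffs ^^ m) c p * x ^ p) \<le> B" if x: "x \<in> {0<..<1}" for x
    using bound[OF x] iter_deriv_on_powser[OF c g _ x] unfolding powser_diffs_def by metis
qed

lemma summable_Beta_diffs_if_RL_deriv_bounded:
  fixes c :: "nat \<Rightarrow> real"
  assumes c: "\<And>p. 0 \<le> c p" and g: "\<And>l. l \<in> {0<..<1} \<Longrightarrow> (\<lambda>p. c p * l ^ p) sums g l"
    and \<beta>: "0 < \<beta>" "\<beta> < 1"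
    and bound: "\<And>x. x \<in> {0<..<1} \<Longrightarrow>
      \<exists>h v. iter_deriv_on m g {0<..<1} h \<and> has_RL_deriv \<beta> h x v \<and> v \<le> B"
  shows "summable (\<lambda>p. (diffs ^^ m) c p * Beta (real p + 1) (1 - \<beta>) * (real p + (1 - \<beta>)))"
proof -
  define d where "d = (diffs ^^ m) c"
  define J where "J y = integral {0..y} (\<lambda>t. powser_diffs c m t * (y - t) powr (- \<beta>))" for y
  have d_nonneg: "0 \<le> d p" for p
    unfolding d_def using c by (rule diffs_funpow_nonneg)
  have J_RL: "(\<forall>y\<in>{0<..<1}. (\<lambda>t. powser_diffs c m t * (y - t) powr (- \<beta>)) integrable_on {0..y})
      \<and> (\<exists>D\<le>Gamma (1 - \<beta>) * B. (J has_real_derivative D) (at x))" if x: "x \<in> {0<..<1}" for x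
  proof -
    obtain h v where "v \<le> B" and h: "iter_deriv_on m g {0<..<1} h" and RL: "has_RL_deriv \<beta> h x v"
      using bound[OF x] by blast
    note has_RL_deriv_integral[OF RL x iter_deriv_on_powser[OF c g h]]
    moreover have "Gamma (1 - \<beta>) * v \<le> Gamma (1 - \<beta>) * B"
      using \<open>v \<le> B\<close> \<beta> by (simp add: Gamma_real_pos)
    ultimately show ?thesis
      unfolding J_def by blast
  qed
  have "(\<lambda>p. (d p * Beta (real p + 1) (1 - \<beta>)) * y powr (real p + (1 - \<beta>))) sums J y"
    if y: "y \<in> {0<..<1}" for y
    using powser_fractional_integral_sums[OF d_nonneg, where y=y and b="1 - \<beta>"] J_RL[OF y] y \<beta>
      summable_diffs_funpow_powser[OF c g]
    unfolding J_def powser_diffs_def d_def by (simp add: mult.assoc)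
  then show ?thesis
    unfolding d_def[symmetric]
  proof (rule summable_if_powr_series_deriv_bounded[rotated 2])
    show "0 \<le> d p * Beta (real p + 1) (1 - \<beta>)" for p
      using d_nonneg \<beta> by (simp add: Beta_def Gamma_real_pos)
  qed (use \<beta> J_RL in auto)
qed

definition even_coeffs :: "(nat \<Rightarrow> real) \<Rightarrow> nat \<Rightarrow> real" where
  "even_coeffs b p = (if even p then b (p div 2) else 0)"

lemma even_coeffs_nonneg: "(\<And>n. 0 \<le> b n) \<Longrightarrow> 0 \<le> even_coeffs b p"
  unfolding even_coeffs_def by simp

lemma even_coeffs_sums:
  "(\<lambda>n. b n * (l\<^sup>2) ^ n) sums s \<Longrightarrow> (\<lambda>p. even_coeffs b p * l ^ p) sums s"
  by (rule sums_even_terms) (simp_all add: even_coeffs_def power_mult)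

lemma power_mult_le_diffs_even_coeffs:
  assumes b: "\<And>n. 0 \<le> b n" and "m \<le> n"
  shows "real n ^ m * b n \<le> (diffs ^^ m) (even_coeffs b) (2 * n - m)"
proof -
  have "real n ^ m \<le> real (Suc (2 * n - m)) ^ m"
    using assms by (intro power_mono) auto
  also have "\<dots> \<le> pochhammer (real (Suc (2 * n - m))) m"
    by (rule power_le_pochhammer) simp
  finally have "real n ^ m * b n \<le> pochhammer (real (Suc (2 * n - m))) m * b n"
    by (intro mult_right_mono b)
  moreover have "2 * n - m + m = 2 * n"
    using assms by simp
  ultimately show ?thesis
    unfolding diffs_funpow_eq by (simp add: even_coeffs_def)
qed

lemma alpha_weight_le_diffs_even_coeffs:
  assumes b: "\<And>n. 0 \<le> b n" and "m < n" and "\<alpha> = real m + \<beta>" and "0 \<le> \<beta>"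
  shows "(1 + real n powr \<alpha>) * b n \<le>
    2 * (diffs ^^ m) (even_coeffs b) (2 * n - m) * real (2 * n - m) powr \<beta>"
proof -
  have n: "1 \<le> real n"
    using assms(2) by simp
  have n_powr: "real n powr \<alpha> = real n ^ m * real n powr \<beta>"
    using n assms(3) by (simp add: powr_add powr_realpow)
  have "1 * 1 \<le> real n ^ m * real n powr \<beta>"
    using n assms(4) by (intro mult_mono one_le_power ge_one_powr_ge_zero) auto
  then have "1 + real n powr \<alpha> \<le> 2 * (real n ^ m * real n powr \<beta>)"
    unfolding n_powr by simp
  from mult_right_mono[OF this b]
  have "(1 + real n powr \<alpha>) * b n \<le> 2 * (real n ^ m * b n) * real n powr \<beta>"
    by (simp add: mult_ac)
  also have "\<dots> \<le> 2 * (diffs ^^ m) (even_coeffs b) (2 * n - m) * real (2 * n - m) powr \<beta>"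
    using assms power_mult_le_diffs_even_coeffs[OF b, of m n] diffs_funpow_nonneg[OF even_coeffs_nonneg[OF b]]
    by (intro mult_mono mult_left_mono powr_mono2) auto
  finally show ?thesis .
qed

lemma summable_alpha_weight_if_dominated:
  fixes b Y :: "nat \<Rightarrow> real"
  assumes b: "\<And>n. 0 \<le> b n" and "summable Y" and "\<And>p. 0 \<le> Y p"
    and le: "\<And>n. m < n \<Longrightarrow> (1 + real n powr \<alpha>) * b n \<le> Y (2 * n - m)"
  shows "summable (\<lambda>n. (1 + real n powr \<alpha>) * b n)"
proof (rule summable_comparison_test'[OF summable_double_minus[OF assms(2,3), of m]])
  show "norm ((1 + real n powr \<alpha>) * b n) \<le> Y (2 * n - m)" if "Suc m \<le> n" for n
    using le[of n] that b[of n] by simp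
qed

lemma summable_alpha_weight_nat:
  fixes b :: "nat \<Rightarrow> real"
  assumes b: "\<And>n. 0 \<le> b n" and g: "\<And>l. l \<in> {0<..<1} \<Longrightarrow> (\<lambda>n. b n * (l\<^sup>2) ^ n) sums g l"
    and \<alpha>: "\<alpha> \<in> \<nat>" and bound: "\<forall>l\<in>{0<..<1}. \<exists>v. has_alpha_deriv \<alpha> g l v \<and> v \<le> B"
  shows "summable (\<lambda>n. (1 + real n powr \<alpha>) * b n)"
proof -
  obtain m where m: "\<alpha> = real m"
    using \<alpha> by (auto elim: Nats_cases)
  define d where "d = (diffs ^^ m) (even_coeffs b)"
  have "summable d"
    unfolding d_def
  proof (rule summable_diffs_if_iter_deriv_bounded[OF even_coeffs_nonneg[OF b] even_coeffs_sums[OF g]])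
    show "\<exists>h. iter_deriv_on m g {0<..<1} h \<and> h x \<le> B" if "x \<in> {0<..<1}" for x
      using bound that m unfolding has_alpha_deriv_def by fastforce
  qed
  then have "summable (\<lambda>p. 2 * d p)"
    by (rule summable_mult)
  then show ?thesis
  proof (rule summable_alpha_weight_if_dominated[OF b, where m=m])
    show "0 \<le> 2 * d p" for p
      unfolding d_def using diffs_funpow_nonneg[OF even_coeffs_nonneg[OF b]] by simp
    show "(1 + real n powr \<alpha>) * b n \<le> 2 * d (2 * n - m)" if "m < n" for n
      using alpha_weight_le_diffs_even_coeffs[OF b that _ order.refl, of \<alpha>] m that
      unfolding d_def by simp
  qed
qed

lemma floor_frac_split:
  fixes \<alpha> :: real
  assumes "0 < \<alpha>" and "\<alpha> \<notin> \<nat>"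
  shows "\<alpha> = real (nat \<lfloor>\<alpha>\<rfloor>) + (\<alpha> - of_int \<lfloor>\<alpha>\<rfloor>)" and "0 < \<alpha> - of_int \<lfloor>\<alpha>\<rfloor>" and "\<alpha> - of_int \<lfloor>\<alpha>\<rfloor> < 1"
proof -
  show split: "\<alpha> = real (nat \<lfloor>\<alpha>\<rfloor>) + (\<alpha> - of_int \<lfloor>\<alpha>\<rfloor>)"
    using assms(1) by simp
  have "\<alpha> \<noteq> of_int \<lfloor>\<alpha>\<rfloor>"
    using assms split by (metis add.right_neutral diff_self of_nat_in_Nats)
  then show "0 < \<alpha> - of_int \<lfloor>\<alpha>\<rfloor>"
    by (simp add: order_less_le)
  show "\<alpha> - of_int \<lfloor>\<alpha>\<rfloor> < 1"
    by linarith
qed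

text \<open>Writing \<open>\<alpha> = m + \<beta>\<close>, the hypothesis bounds the derivative of the fractional integral
  of order \<open>1 - \<beta>\<close> of the \<open>m\<close>-th derivative of \<open>g\<close>; termwise this integral is
  \<open>\<Sum> d p * Beta (p + 1) (1 - \<beta>) * y powr (p + 1 - \<beta>)\<close>, and the factor
  \<open>Beta (p + 1) (1 - \<beta>) * (p + 1 - \<beta>)\<close> produced by differentiation dominates \<open>p powr \<beta>\<close>.\<close>

lemma summable_alpha_weight_frac:
  fixes b :: "nat \<Rightarrow> real"
  assumes b: "\<And>n. 0 \<le> b n" and g: "\<And>l. l \<in> {0<..<1} \<Longrightarrow> (\<lambda>n. b n * (l\<^sup>2) ^ n) sums g l"
    and \<alpha>: "0 < \<alpha>" "\<alpha> \<notin> \<nat>" and bound: "\<forall>l\<in>{0<..<1}. \<exists>v. has_alpha_deriv \<alpha> g l v \<and> v \<le> B"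
  shows "summable (\<lambda>n. (1 + real n powr \<alpha>) * b n)"
proof -
  define m where "m = nat \<lfloor>\<alpha>\<rfloor>"
  define \<beta> where "\<beta> = \<alpha> - of_int \<lfloor>\<alpha>\<rfloor>"
  define d where "d = (diffs ^^ m) (even_coeffs b)"
  have \<alpha>_eq: "\<alpha> = real m + \<beta>" and \<beta>: "0 < \<beta>" "\<beta> < 1"
    using floor_frac_split[OF \<alpha>] unfolding m_def \<beta>_def by auto
  have d_nonneg: "0 \<le> d p" for p
    unfolding d_def using even_coeffs_nonneg[OF b] by (rule diffs_funpow_nonneg)
  have "summable (\<lambda>p. d p * Beta (real p + 1) (1 - \<beta>) * (real p + (1 - \<beta>)))"
    unfolding d_def
  proof (rule summable_Beta_diffs_if_RL_deriv_bounded[OF even_coeffs_nonneg[OF b] even_coeffs_sums[OF g] \<beta>])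
    show "\<exists>h v. iter_deriv_on m g {0<..<1} h \<and> has_RL_deriv \<beta> h x v \<and> v \<le> B" if "x \<in> {0<..<1}" for x
      using bound that \<alpha>(2) unfolding has_alpha_deriv_def m_def \<beta>_def by fastforce
  qed
  then show ?thesis
  proof (rule summable_alpha_weight_if_dominated[OF b, where m=m, OF summable_mult[of _ "2 / Gamma (1 - \<beta>)"]])
    show "0 \<le> 2 / Gamma (1 - \<beta>) * (d p * Beta (real p + 1) (1 - \<beta>) * (real p + (1 - \<beta>)))" for p
      using d_nonneg \<beta> by (simp add: Beta_def Gamma_real_pos)
    fix n assume "m < n"
    define p where "p = 2 * n - m"
    have p: "1 \<le> real p"
      using \<open>m < n\<close> unfolding p_def by simp
    have "(1 + real n powr \<alpha>) * b n \<le> 2 * d p * real p powr \<beta>"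
      unfolding p_def d_def by (rule alpha_weight_le_diffs_even_coeffs[OF b \<open>m < n\<close> \<alpha>_eq]) (use \<beta> in simp)
    also have "\<dots> \<le> 2 * d p * (Beta (real p + 1) (1 - \<beta>) * (real p + (1 - \<beta>)) / Gamma (1 - \<beta>))"
      using powr_le_Gamma_ratio[OF p \<beta>] Beta_plus1_mult_eq[of "real p" "1 - \<beta>"] d_nonneg[of p] \<beta>
      by (intro mult_left_mono) (auto simp: add_diff_eq)
    finally show "(1 + real n powr \<alpha>) * b n \<le>
        2 / Gamma (1 - \<beta>) * (d (2 * n - m) * Beta (real (2 * n - m) + 1) (1 - \<beta>) * (real (2 * n - m) + (1 - \<beta>)))"
      unfolding p_def by (simp add: field_simps)
  qed
qed

section \<open>Regularity of the Gauss kernel\<close>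

definition chaos_norm2 :: "(nat \<Rightarrow> nat list \<Rightarrow> complex) \<Rightarrow> nat \<Rightarrow> real" where
  "chaos_norm2 F n = fact n * kernel_norm2 F n"

lemma chaos_norm2_nonneg: "0 \<le> chaos_norm2 F n"
  unfolding chaos_norm2_def kernel_norm2_def by (simp add: infsum_nonneg)

lemma gfun_chaos_norm2_sums:
  assumes gauss: "is_gauss_kernel a F" and eig: "\<And>k. 0 < a k \<and> a k < 2"
    and l: "l \<in> {0<..<1}" and pos: "0 < det_lam a l"
  shows "sq_integrable_kernels F" and "(\<lambda>n. chaos_norm2 F n * (l\<^sup>2) ^ n) sums gfun a l"
proof -
  have prod_eq: "(\<lambda>N. \<Prod>k<N. 1 - (l\<^sup>2)\<^sup>2 * (1 - a k)\<^sup>2) = (\<lambda>N. \<Prod>k<N. 1 - (l\<^sup>2 * (1 - a k))\<^sup>2)"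
    by (simp add: power_mult_distrib)
  have lim_pos: "lim (\<lambda>N. \<Prod>k<N. 1 - (l\<^sup>2)\<^sup>2 * (1 - a k)\<^sup>2) > 0"
    using pos unfolding prod_eq det_lam_def .
  have s: "0 < l\<^sup>2" "l\<^sup>2 \<le> 1"
    using l by (auto simp: power_le_one)
  note chaos_norm2_generating[OF gauss eig s lim_pos]
  then show "sq_integrable_kernels F" and "(\<lambda>n. chaos_norm2 F n * (l\<^sup>2) ^ n) sums gfun a l"
    unfolding prod_eq gfun_def det_lam_def chaos_norm2_def by simp_all
qed

theorem theorem3p11:
  fixes a :: "nat \<Rightarrow> real" and F :: "nat \<Rightarrow> nat list \<Rightarrow> complex"
  assumes eig: "\<And>k. 0 < a k \<and> a k < 2"
    and gauss: "is_gauss_kernel a F"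
  shows "(0 < det_2A_A2 a \<longrightarrow> in_L2 F) \<and>
         (\<forall>\<alpha>>0. ((\<forall>l\<in>{0<..<1}. 0 < det_lam a l) \<and>
                  (\<exists>B. \<forall>l\<in>{0<..<1}. \<exists>v. has_alpha_deriv \<alpha> (gfun a) l v \<and> v \<le> B))
               \<longrightarrow> in_D \<alpha> F)"
proof (intro conjI allI impI)
  show "in_L2 F" if "0 < det_2A_A2 a"
    by (rule gauss_kernel_in_L2[OF gauss eig that])
  fix \<alpha> :: real
  assume "\<alpha> > 0" and "(\<forall>l\<in>{0<..<1}. 0 < det_lam a l) \<and>
    (\<exists>B. \<forall>l\<in>{0<..<1}. \<exists>v. has_alpha_deriv \<alpha> (gfun a) l v \<and> v \<le> B)"
  then obtain B where pos: "\<forall>l\<in>{0<..<1}. 0 < det_lam a l"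
    and bound: "\<forall>l\<in>{0<..<1}. \<exists>v. has_alpha_deriv \<alpha> (gfun a) l v \<and> v \<le> B"
    by blast
  have G: "sq_integrable_kernels F" "(\<lambda>n. chaos_norm2 F n * (l\<^sup>2) ^ n) sums gfun a l"
    if "l \<in> {0<..<1}" for l
    using gfun_chaos_norm2_sums[OF gauss eig that] pos that by auto
  have "summable (\<lambda>n. (1 + real n powr \<alpha>) * chaos_norm2 F n)"
  proof (cases "\<alpha> \<in> \<nat>")
    case True
    show ?thesis by (rule summable_alpha_weight_nat[OF chaos_norm2_nonneg G(2) True bound])
  next
    case False
    show ?thesis by (rule summable_alpha_weight_frac[OF chaos_norm2_nonneg G(2) \<open>\<alpha> > 0\<close> False bound])
  qed
  then show "in_D \<alpha> F"
    using G(1)[of "1/2"] unfolding in_D_def chaos_norm2_def by (simp add: mult.assoc)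
qed

end
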